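(* Let $F$ be a commutative field, $1\le h\le n-1$, and let $K$ be a linear complex of $h$-subspaces in $\mathrm{PG}(n,F)$. Then: (a) the partial map $\uparrow K:\Gamma(n,h-1,F)\to\mathrm{PG}(n,F)^*$ is a linear mapping with non-empty domain satisfying the null property $U\subseteq U^{\uparrow K}$ for all $U\in\mathbb D(\uparrow K)$ (i.e. it is a generalised null polarity); (b) the image of $\uparrow K$ spans a subspace of $\mathrm{PG}(n,F)^*$ of dimension at least $h$.
   Context: A $d$-subspace is a projective subspace of dimension $d$. Linear complex: with $N=\binom{n+1}{h+1}-1$ and Plücker embedding $\wp_{n,h}$ (sending the span of independent $v_0,\dots,v_h\in F^{n+1}$ to $F(v_0\wedge\cdots\wedge v_h)\in\mathrm{PG}(N,F)$, image the Grassmann variety $\mathcal G_{n,h}$), a linear complex of $h$-subspaces is the set of $h$-subspaces whose Plücker image lies in a fixed hyperplane of $\mathrm{PG}(N,F)$. Grassmannian $\Gamma(n,k,F)$: points are $k$-subspaces, lines are pencils $\{X: U\subset X\subset W,\dim X=k\}$ with $\dim U=k-1,\dim W=k+1$. $\mathrm{PG}(n,F)^*$ is the dual projective space. An $(h-1)$-subspace $U$ is singular for $K$ if every $h$-subspace containing $U$ lies in $K$; for non-singular $U$ there is a unique hyperplane $E$ (the polar hyperplane of $U$) such that an $h$-subspace $X\supseteq U$ belongs to $K$ iff $X\subseteq E$; $E$ is the union of the elements of $K$ containing $U$. The partial map $\uparrow K$ on $(h-1)$-subspaces has exceptional set the singular $(h-1)$-subspaces and sends each non-singular $U$ to its polar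 hyperplane. A partial map $\chi$ (defined on domain $\mathbb D(\chi)$, exceptional set $\mathbb A(\chi)$ = complement, $\phi^\chi=\{X^\chi:X\in\phi\cap\mathbb D(\chi)\}$) between semilinear spaces is a linear mapping if for each line $\ell$ exactly one holds: (i) $\ell^\chi$ is a line and $\chi$ maps $\ell$ bijectively onto it; (ii) $\ell^\chi$ is one point and $|\ell\cap\mathbb A(\chi)|=1$; (iii) $\ell\subseteq\mathbb A(\chi)$. *)

theory Defs
  imports Main "HOL-Combinatorics.Permutations"
begin

definition vecs :: "nat \<Rightarrow> (nat \<Rightarrow> 'a::field) set" where
  "vecs n = {v. \<forall>i>n. v i = 0}"

definition lincomb :: "(nat \<Rightarrow> 'a::field) list \<Rightarrow> (nat \<Rightarrow> 'a) \<Rightarrow> (nat \<Rightarrow> 'a)" where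
  "lincomb vs a = (\<lambda>k. \<Sum>i<length vs. a i * (vs ! i) k)"

definition lspan :: "(nat \<Rightarrow> 'a::field) list \<Rightarrow> (nat \<Rightarrow> 'a) set" where
  "lspan vs = range (lincomb vs)"

definition lindep_free :: "(nat \<Rightarrow> 'a::field) list \<Rightarrow> bool" where
  "lindep_free vs \<longleftrightarrow> (\<forall>a. lincomb vs a = (\<lambda>_. 0) \<longrightarrow> (\<forall>i<length vs. a i = 0))"

text \<open>vsub n k X: X is a vector subspace of F^(n+1) of (vector) dimension k, i.e. a
  projective subspace of PG(n,F) of projective dimension k-1 (given as its set of vectors).\<close>
definition vsub :: "nat \<Rightarrow> nat \<Rightarrow> (nat \<Rightarrow> 'a::field) set \<Rightarrow> bool" where
  "vsub n k X \<longleftrightarrow> (\<exists>vs. length vs = k \<and> set vs \<subseteq> vecs n \<and> lindep_free vs \<and> X = lspan vs)"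

definition plucker_coord :: "nat \<Rightarrow> (nat \<Rightarrow> 'a::field) list \<Rightarrow> nat set \<Rightarrow> 'a" where
  "plucker_coord h vs I =
     (\<Sum>\<sigma> | \<sigma> permutes {..h}. of_int (sign \<sigma>) * (\<Prod>i\<le>h. (vs ! i) (sorted_list_of_set I ! \<sigma> i)))"

definition plucker_index :: "nat \<Rightarrow> nat \<Rightarrow> nat set set" where
  "plucker_index n h = {I. I \<subseteq> {..n} \<and> card I = h + 1}"

definition linear_complex :: "nat \<Rightarrow> nat \<Rightarrow> (nat \<Rightarrow> 'a::field) set set \<Rightarrow> bool" where
  "linear_complex n h K \<longleftrightarrow>
     (\<exists>c :: nat set \<Rightarrow> 'a. (\<exists>I\<in>plucker_index n h. c I \<noteq> 0) \<and>
        K = {X. \<exists>vs. length vs = h + 1 \<and> set vs \<subseteq> vecs n \<and> lindep_free vs \<and> X = lspan vs \<and>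
                     (\<Sum>I\<in>plucker_index n h. c I * plucker_coord h vs I) = 0})"

text \<open>Points: k-subspaces (vector dimension k+1). Lines: pencils {X : U <= X <= W}
  with U a (k-1)-subspace (vector dim k) and W a (k+1)-subspace (vector dim k+2).\<close>
definition gr_points :: "nat \<Rightarrow> nat \<Rightarrow> (nat \<Rightarrow> 'a::field) set set" where
  "gr_points n k = {X. vsub n (k + 1) X}"

definition gr_lines :: "nat \<Rightarrow> nat \<Rightarrow> (nat \<Rightarrow> 'a::field) set set set" where
  "gr_lines n k = {{X. vsub n (k + 1) X \<and> U \<subseteq> X \<and> X \<subseteq> W} | U W.
                     vsub n k U \<and> vsub n (k + 2) W \<and> U \<subseteq> W}"

text \<open>Subspaces of the dual space of projective dimension m: the sets of hyperplanes
  containing a fixed subspace of vector dimension n - m.\<close>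
definition dual_subspace :: "nat \<Rightarrow> nat \<Rightarrow> (nat \<Rightarrow> 'a::field) set set \<Rightarrow> bool" where
  "dual_subspace n m T \<longleftrightarrow> m \<le> n \<and> (\<exists>W. vsub n (n - m) W \<and> T = {E. vsub n n E \<and> W \<subseteq> E})"

definition dual_points :: "nat \<Rightarrow> (nat \<Rightarrow> 'a::field) set set" where
  "dual_points n = {E. vsub n n E}"

definition dual_lines :: "nat \<Rightarrow> (nat \<Rightarrow> 'a::field) set set set" where
  "dual_lines n = {T. dual_subspace n 1 T}"

definition dual_span_dim :: "nat \<Rightarrow> (nat \<Rightarrow> 'a::field) set set \<Rightarrow> nat" where
  "dual_span_dim n S = (LEAST m. \<exists>T. dual_subspace n m T \<and> S \<subseteq> T)"

text \<open>A partial map with domain D (a subset of the points P1) given by f on D.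
  The image of a line l is f ` (l \<inter> D); the exceptional set is P1 - D.\<close>
definition linear_mapping ::
  "'p set \<Rightarrow> 'p set set \<Rightarrow> 'q set \<Rightarrow> 'q set set \<Rightarrow> 'p set \<Rightarrow> ('p \<Rightarrow> 'q) \<Rightarrow> bool" where
  "linear_mapping P1 L1 P2 L2 D f \<longleftrightarrow>
     D \<subseteq> P1 \<and> f ` D \<subseteq> P2 \<and>
     (\<forall>l\<in>L1.
        let c1 = (l \<subseteq> D \<and> f ` l \<in> L2 \<and> inj_on f l);
            c2 = ((\<exists>p. f ` (l \<inter> D) = {p}) \<and> (\<exists>q. l - D = {q}));
            c3 = (l \<inter> D = {})
        in (c1 \<and> \<not> c2 \<and> \<not> c3) \<or> (\<not> c1 \<and> c2 \<and> \<not> c3) \<or> (\<not> c1 \<and> \<not> c2 \<and> c3))"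

definition singular :: "nat \<Rightarrow> nat \<Rightarrow> (nat \<Rightarrow> 'a::field) set set \<Rightarrow> (nat \<Rightarrow> 'a) set \<Rightarrow> bool" where
  "singular n h K U \<longleftrightarrow> vsub n h U \<and> (\<forall>X. vsub n (h + 1) X \<and> U \<subseteq> X \<longrightarrow> X \<in> K)"

text \<open>Domain of the partial map up K: the non-singular (h-1)-subspaces.\<close>
definition nonsingular :: "nat \<Rightarrow> nat \<Rightarrow> (nat \<Rightarrow> 'a::field) set set \<Rightarrow> (nat \<Rightarrow> 'a) set set" where
  "nonsingular n h K = {U. vsub n h U \<and> \<not> singular n h K U}"

definition polar :: "nat \<Rightarrow> nat \<Rightarrow> (nat \<Rightarrow> 'a::field) set set \<Rightarrow> (nat \<Rightarrow> 'a) set \<Rightarrow> (nat \<Rightarrow> 'a) set" where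
  "polar n h K U = (THE E. vsub n n E \<and>
      (\<forall>X. vsub n (h + 1) X \<and> U \<subseteq> X \<longrightarrow> (X \<in> K \<longleftrightarrow> X \<subseteq> E)))"

end

theory Submission
  imports Defs "HOL-Library.Function_Algebras" "Jordan_Normal_Form.Determinant"
begin

text \<open>A linear complex is the zero set of the Plucker form
  \<phi>(v_0, ..., v_h) = \<Sum> c_I p_I(v_0, ..., v_h), which is multilinear and changes only by a
  nonzero factor when the v_i are replaced by another basis of their span. For an (h-1)-space
  U = span us, the map y \<mapsto> \<phi>(us @ [y]) is a linear functional vanishing on U: it is identically
  zero iff U is singular, and otherwise its kernel is the polar hyperplane of U, which therefore
  contains U. Along a pencil of (h-1)-spaces span (vs @ [\<alpha> a + \<beta> b]) this functional is
  \<alpha> f_a + \<beta> f_b; according as f_a, f_b span a space of dimension 0, 1 or 2, the pencil is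
  entirely singular, has exactly one singular member and otherwise a constant polar, or is mapped
  bijectively onto the pencil of hyperplanes through the common kernel of f_a and f_b.
  Finally, a subspace W of dimension greater than n - h meets every h-space X \<notin> K in some
  z \<noteq> 0, and the other vectors of a basis of X through z span a nonsingular U whose polar
  misses z; so the polars cannot all contain W.\<close>

section \<open>Vectors, subspaces and linear functionals\<close>

definition fscale :: "'a::field \<Rightarrow> (nat \<Rightarrow> 'a) \<Rightarrow> nat \<Rightarrow> 'a" where
  "fscale c v = (\<lambda>k. c * v k)"

lemma fscale_apply [simp]: "fscale c v k = c * v k"
  by (simp add: fscale_def)

interpretation fv: vector_space "fscale :: 'a::field \<Rightarrow> _"
  by unfold_locales (auto simp: fscale_def algebra_simps func_plus)

abbreviation fspan :: "(nat \<Rightarrow> 'a::field) set \<Rightarrow> (nat \<Rightarrow> 'a) set" where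
  "fspan \<equiv> fv.span"

abbreviation findependent :: "(nat \<Rightarrow> 'a::field) set \<Rightarrow> bool" where
  "findependent \<equiv> fv.independent"

lemma sum_fun_apply: "(\<Sum>i\<in>A. f i) k = (\<Sum>i\<in>A. f i k)" for f :: "_ \<Rightarrow> nat \<Rightarrow> 'a::field"
  by (induction A rule: infinite_finite_induct) (auto simp: func_plus func_zero)

lemma lincomb_eq_sum: "lincomb vs a = (\<Sum>i<length vs. fscale (a i) (vs!i))"
  by (rule ext) (simp add: lincomb_def sum_fun_apply)

lemma lincomb_indicator: "i < length vs \<Longrightarrow> lincomb vs (\<lambda>l. if l = i then 1 else 0) = vs ! i"
proof (rule ext)
  fix k assume i: "i < length vs"
  have "(\<Sum>l<length vs. (if l = i then 1 else 0) * (vs ! l) k) = (\<Sum>l<length vs. if l = i then (vs!l) k else 0)"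
    by (rule sum.cong) auto
  then show "lincomb vs (\<lambda>l. if l = i then 1 else 0) k = (vs ! i) k"
    using i by (simp add: lincomb_def)
qed

lemma lincomb_add: "lincomb vs (\<lambda>l. a l + b l) = lincomb vs a + lincomb vs b"
  by (rule ext) (simp add: lincomb_def func_plus algebra_simps sum.distrib)

lemma lincomb_scale: "lincomb vs (\<lambda>l. c * a l) = fscale c (lincomb vs a)"
  by (rule ext) (simp add: lincomb_def sum_distrib_left algebra_simps)

lemma lincomb_distinct:
  "distinct vs \<Longrightarrow> lincomb vs (\<lambda>i. u (vs!i)) = (\<Sum>v\<in>set vs. fscale (u v) v)"
  by (simp add: lincomb_eq_sum sum.distinct_set_conv_list sum_list_sum_nth atLeast0LessThan)

lemma lspan_eq_fspan: "lspan vs = fspan (set vs)"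
proof
  show "lspan vs \<subseteq> fspan (set vs)"
    unfolding lspan_def lincomb_eq_sum by (auto intro!: fv.span_sum fv.span_scale intro: fv.span_base)
  have "fv.subspace (lspan vs)"
    unfolding fv.subspace_def lspan_def
  proof (intro conjI ballI allI)
    have "lincomb vs (\<lambda>l. 0) = 0"
      by (rule ext) (simp add: lincomb_def func_zero)
    then show "0 \<in> range (lincomb vs)"
      by (metis rangeI)
  next
    fix x y assume "x \<in> range (lincomb vs)" "y \<in> range (lincomb vs)"
    then obtain a b where "x = lincomb vs a" "y = lincomb vs b" by auto
    then show "x + y \<in> range (lincomb vs)"
      using lincomb_add[of vs a b] by (metis rangeI)
  next
    fix c x assume "x \<in> range (lincomb vs)"
    then obtain a where "x = lincomb vs a" by auto
    then show "fscale c x \<in> range (lincomb vs)"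
      using lincomb_scale[of vs c a] by (metis rangeI)
  qed
  moreover have "set vs \<subseteq> lspan vs"
    unfolding lspan_def by (auto simp: in_set_conv_nth) (metis lincomb_indicator rangeI)
  ultimately show "fspan (set vs) \<subseteq> lspan vs"
    using fv.span_minimal by blast
qed

lemma lindep_free_iff_independent: "lindep_free vs \<longleftrightarrow> distinct vs \<and> findependent (set vs)"
proof
  assume L: "lindep_free vs"
  have D: "distinct vs"
  proof (rule ccontr)
    assume "\<not> distinct vs"
    then obtain i j where ij: "i < length vs" "j < length vs" "i \<noteq> j" "vs!i = vs!j"
      by (metis distinct_conv_nth)
    let ?a = "\<lambda>l. (if l = i then 1 else 0) + (-1) * (if l = j then 1 else 0)"
    have "lincomb vs ?a = vs!i + fscale (-1) (vs!j)"
      unfolding lincomb_add lincomb_scale lincomb_indicator[OF ij(1)] lincomb_indicator[OF ij(2)] ..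
    also have "\<dots> = (\<lambda>_. 0)"
      using ij(4) by (simp add: func_plus fscale_def)
    finally have "lincomb vs ?a = (\<lambda>_. 0)" .
    then show False
      using L[unfolded lindep_free_def, rule_format, of ?a i] ij by simp
  qed
  moreover have "findependent (set vs)"
  proof
    assume "fv.dependent (set vs)"
    then obtain u where u: "\<exists>v\<in>set vs. u v \<noteq> 0" "(\<Sum>v\<in>set vs. fscale (u v) v) = 0"
      by (auto simp: fv.dependent_finite)
    have "lincomb vs (\<lambda>i. u (vs!i)) = (\<lambda>_. 0)"
      using lincomb_distinct[OF D, of u] u(2) by (simp add: func_zero)
    then have "\<forall>i<length vs. u (vs!i) = 0"
      using L unfolding lindep_free_def by blast
    then show False
      using u(1) by (auto simp: in_set_conv_nth)
  qed
  ultimately show "distinct vs \<and> findependent (set vs)" by blast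
next
  assume A: "distinct vs \<and> findependent (set vs)"
  show "lindep_free vs"
    unfolding lindep_free_def
  proof (intro allI impI)
    fix a i assume z: "lincomb vs a = (\<lambda>_. 0)" and i: "i < length vs"
    define u where "u v = a (SOME i. i < length vs \<and> vs!i = v)" for v
    have ui: "u (vs!k) = a k" if "k < length vs" for k
    proof -
      have "(SOME i. i < length vs \<and> vs!i = vs!k) = k"
        using A that by (intro some_equality) (auto simp: nth_eq_iff_index_eq)
      then show ?thesis by (simp add: u_def)
    qed
    have "lincomb vs (\<lambda>i. u (vs!i)) = lincomb vs a"
      unfolding lincomb_def by (intro ext sum.cong) (auto simp: ui)
    then have "(\<Sum>v\<in>set vs. fscale (u v) v) = 0"
      using z lincomb_distinct[of vs u] A by (simp add: func_zero)
    then have "\<forall>v\<in>set vs. u v = 0"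
      using A by (auto simp: fv.dependent_finite)
    then show "a i = 0"
      using ui[OF i] i by auto
  qed
qed

lemma vsub_iff_basis:
  "vsub n k X \<longleftrightarrow> (\<exists>B. finite B \<and> card B = k \<and> B \<subseteq> vecs n \<and> findependent B \<and> X = fspan B)"
proof
  assume "vsub n k X"
  then obtain vs where "length vs = k" "set vs \<subseteq> vecs n" "lindep_free vs" "X = lspan vs"
    by (auto simp: vsub_def)
  then show "\<exists>B. finite B \<and> card B = k \<and> B \<subseteq> vecs n \<and> findependent B \<and> X = fspan B"
    by (intro exI[of _ "set vs"]) (auto simp: lindep_free_iff_independent lspan_eq_fspan distinct_card)
next
  assume "\<exists>B. finite B \<and> card B = k \<and> B \<subseteq> vecs n \<and> findependent B \<and> X = fspan B"
  then obtain B where B: "finite B" "card B = k" "B \<subseteq> vecs n" "findependent B" "X = fspan B"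
    by blast
  obtain vs where "set vs = B" "distinct vs"
    using finite_distinct_list[OF B(1)] by blast
  then show "vsub n k X"
    unfolding vsub_def using B
    by (intro exI[of _ vs]) (auto simp: lindep_free_iff_independent lspan_eq_fspan distinct_card)
qed

lemma vsub_lspan: "length us = k \<Longrightarrow> set us \<subseteq> vecs n \<Longrightarrow> lindep_free us \<Longrightarrow> vsub n k (lspan us)"
  unfolding vsub_def by blast

lemma lindep_free_append:
  assumes "lindep_free us" "y \<notin> lspan us"
  shows "lindep_free (us @ [y])"
proof -
  have "y \<notin> set us"
    using assms(2) fv.span_superset lspan_eq_fspan by blast
  moreover have "findependent (insert y (set us))"
    using fv.independent_insertI[of y "set us"] assms
    unfolding lindep_free_iff_independent lspan_eq_fspan by blast
  ultimately show ?thesis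
    using assms(1) unfolding lindep_free_iff_independent by simp
qed

lemma lspan_append_subset:
  assumes "fv.subspace Z" "lspan us \<subseteq> Z" "y \<in> Z"
  shows "lspan (us @ [y]) \<subseteq> Z"
  using assms fv.span_superset[of "set us"] fv.span_minimal[of "insert y (set us)" Z]
  unfolding lspan_eq_fspan by auto

definition unit_vec :: "nat \<Rightarrow> nat \<Rightarrow> 'a::field" where
  "unit_vec i = (\<lambda>k. if k = i then 1 else 0)"

lemma inj_unit_vec: "inj (unit_vec :: nat \<Rightarrow> nat \<Rightarrow> 'a::field)"
  by (rule injI) (metis unit_vec_def one_neq_zero)

lemma subspace_vecs: "fv.subspace (vecs n)"
  by (auto simp: fv.subspace_def vecs_def func_plus func_zero)

lemma vecs_eq_fspan_unit_vecs: "vecs n = fspan ((unit_vec :: nat \<Rightarrow> nat \<Rightarrow> 'a::field) ` {..n})"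
proof
  show "vecs n \<subseteq> fspan ((unit_vec :: nat \<Rightarrow> nat \<Rightarrow> 'a) ` {..n})"
  proof
    fix v :: "nat \<Rightarrow> 'a" assume v: "v \<in> vecs n"
    have "v = (\<Sum>i\<le>n. fscale (v i) (unit_vec i))"
    proof (rule ext)
      fix k
      have "(\<Sum>i\<le>n. fscale (v i) (unit_vec i)) k = (\<Sum>i\<le>n. if i = k then v k else 0)"
        unfolding sum_fun_apply by (rule sum.cong) (auto simp: unit_vec_def)
      then show "v k = (\<Sum>i\<le>n. fscale (v i) (unit_vec i)) k"
        using v by (auto simp: vecs_def)
    qed
    also have "\<dots> \<in> fspan (unit_vec ` {..n})"
      by (auto intro!: fv.span_sum fv.span_scale intro: fv.span_base)
    finally show "v \<in> fspan (unit_vec ` {..n})" .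
  qed
  show "fspan ((unit_vec :: nat \<Rightarrow> nat \<Rightarrow> 'a) ` {..n}) \<subseteq> vecs n"
    by (rule fv.span_minimal[OF _ subspace_vecs]) (auto simp: vecs_def unit_vec_def)
qed

lemma independent_unit_vecs: "findependent ((unit_vec :: nat \<Rightarrow> nat \<Rightarrow> 'a::field) ` {..n})"
proof
  assume "fv.dependent ((unit_vec :: nat \<Rightarrow> nat \<Rightarrow> 'a) ` {..n})"
  then obtain u where u: "\<exists>v\<in>unit_vec ` {..n}. u v \<noteq> (0::'a)"
      "(\<Sum>v\<in>unit_vec ` {..n}. fscale (u v) v) = 0"
    by (auto simp: fv.dependent_finite)
  have "(\<Sum>v\<in>unit_vec ` {..n}. fscale (u v) v) = (\<Sum>i\<le>n. fscale (u (unit_vec i)) (unit_vec i))"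
    by (rule sum.reindex_cong[OF inj_on_subset[OF inj_unit_vec]]) auto
  then have Z: "(\<Sum>i\<le>n. fscale (u (unit_vec i)) (unit_vec i)) = 0"
    using u by simp
  have "u (unit_vec k) = 0" if k: "k \<le> n" for k
  proof -
    have "0 = (\<Sum>i\<le>n. fscale (u (unit_vec i)) (unit_vec i)) k"
      using Z by (simp add: func_zero)
    also have "\<dots> = (\<Sum>i\<le>n. if i = k then u (unit_vec k) else 0)"
      unfolding sum_fun_apply by (rule sum.cong) (auto simp: unit_vec_def)
    finally show ?thesis
      using k by simp
  qed
  then show False
    using u(1) by auto
qed

lemma vsub_vecs: "vsub n (Suc n) (vecs n :: (nat \<Rightarrow> 'a::field) set)"
  unfolding vsub_iff_basis
proof (intro exI conjI)
  show "card ((unit_vec :: nat \<Rightarrow> nat \<Rightarrow> 'a) ` {..n}) = Suc n"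
    using card_image[OF inj_on_subset[OF inj_unit_vec, of "{..n}"]] by simp
qed (auto simp: independent_unit_vecs vecs_eq_fspan_unit_vecs[symmetric], auto simp: vecs_def unit_vec_def)

lemma vsub_zero: "vsub n 0 {0}"
  unfolding vsub_iff_basis by (intro exI[of _ "{}"]) (auto simp: fv.independent_empty)

lemma fspan_eq_if_card_le:
  assumes B: "findependent B" and C: "findependent C" "finite C"
    and BC: "B \<subseteq> fspan C" and card: "card C \<le> card B"
  shows "fspan B = fspan C"
proof -
  have fB: "finite B"
    using fv.independent_span_bound[OF C(2) B BC] by auto
  have "C \<subseteq> fspan B"
  proof
    fix x assume x: "x \<in> C"
    show "x \<in> fspan B"
    proof (rule ccontr)
      assume nx: "x \<notin> fspan B"
      then have "findependent (insert x B)"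
        using fv.independent_insertI B by blast
      moreover have "insert x B \<subseteq> fspan C"
        using BC x fv.span_base by blast
      ultimately have "card (insert x B) \<le> card C"
        using fv.independent_span_bound[OF C(2)] by blast
      moreover have "x \<notin> B"
        using nx fv.span_base by blast
      ultimately show False
        using fB card by simp
    qed
  qed
  then show ?thesis
    using BC by (simp add: fv.span_eq)
qed

lemma vsub_subspace: "vsub n k X \<Longrightarrow> fv.subspace X \<and> X \<subseteq> vecs n"
  unfolding vsub_iff_basis using fv.span_minimal[OF _ subspace_vecs] by blast

lemma vsub_independent_card_le:
  "vsub n k X \<Longrightarrow> findependent B \<Longrightarrow> B \<subseteq> X \<Longrightarrow> finite B \<and> card B \<le> k"
  unfolding vsub_iff_basis using fv.independent_span_bound by metis

lemma vsub_basis_card: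
  assumes "vsub n k X" "findependent B'" "B' \<subseteq> X" "X \<subseteq> fspan B'"
  shows "finite B' \<and> card B' = k"
proof -
  have le: "finite B'" "card B' \<le> k"
    using vsub_independent_card_le assms by blast+
  obtain B where B: "finite B" "card B = k" "findependent B" "X = fspan B"
    using assms(1) unfolding vsub_iff_basis by blast
  have "B \<subseteq> fspan B'"
    using assms(4) B(4) fv.span_superset by blast
  then have "card B \<le> card B'"
    using fv.independent_span_bound[OF le(1) B(3)] by blast
  then show ?thesis
    using le B by simp
qed

lemma vsub_eq_fspan:
  assumes "vsub n k X" "findependent B'" "B' \<subseteq> X" "k \<le> card B'"
  shows "X = fspan B'"
proof -
  obtain B where B: "finite B" "card B = k" "findependent B" "X = fspan B"
    using assms(1) unfolding vsub_iff_basis by blast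
  show ?thesis
    using fspan_eq_if_card_le[OF assms(2) B(3,1)] assms(3,4) B(2,4) by simp
qed

lemma vsub_dim_mono: "vsub n k X \<Longrightarrow> vsub n k' Y \<Longrightarrow> X \<subseteq> Y \<Longrightarrow> k \<le> k'"
  unfolding vsub_iff_basis by (metis fv.independent_span_bound fv.span_superset subset_trans)

lemma vsub_eq_if_subset: "vsub n k X \<Longrightarrow> vsub n k' Y \<Longrightarrow> X \<subseteq> Y \<Longrightarrow> k' \<le> k \<Longrightarrow> X = Y"
  unfolding vsub_iff_basis
  by (metis fv.span_superset subset_trans vsub_eq_fspan vsub_iff_basis)

lemma vsub_extend_basis:
  assumes X: "vsub n k X" and S: "S \<subseteq> X" "findependent S"
  obtains B where "S \<subseteq> B" "B \<subseteq> X" "findependent B" "finite B" "card B = k" "X = fspan B"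
proof -
  obtain B where B: "S \<subseteq> B" "B \<subseteq> X" "findependent B" "X \<subseteq> fspan B"
    using fv.maximal_independent_subset_extend[OF S] by blast
  have "fspan B \<subseteq> X"
    using B(2) vsub_subspace[OF X] fv.span_minimal by blast
  then show ?thesis
    using that B vsub_basis_card[OF X B(3,2,4)] by blast
qed

lemma vsub_insert:
  assumes X: "vsub n k X" and y: "y \<in> vecs n" "y \<notin> X"
  shows "vsub n (Suc k) (fspan (insert y X))"
proof -
  obtain B where B: "finite B" "card B = k" "B \<subseteq> vecs n" "findependent B" "X = fspan B"
    using X unfolding vsub_iff_basis by blast
  have "fspan (insert y (fspan B)) = fspan (insert y B)"
  proof (rule fv.span_eq[THEN iffD2], intro conjI)
    show "insert y B \<subseteq> fspan (insert y (fspan B))"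
      using fv.span_superset by (metis insert_mono subset_trans)
    show "insert y (fspan B) \<subseteq> fspan (insert y B)"
      using fv.span_mono[of B "insert y B"] fv.span_base[of y "insert y B"] by blast
  qed
  moreover have "y \<notin> B"
    using y B fv.span_superset by blast
  ultimately show ?thesis
    unfolding vsub_iff_basis using B y
    by (intro exI[of _ "insert y B"]) (auto simp: fv.independent_insertI)
qed

lemma vsub_lspan_append:
  assumes us: "length us = k" "set us \<subseteq> vecs n" "lindep_free us"
    and y: "y \<in> vecs n" "y \<notin> lspan us"
  shows "vsub n (Suc k) (lspan (us @ [y]))"
  using us y lindep_free_append[OF us(3) y(2)] unfolding vsub_def
  by (intro exI[of _ "us @ [y]"]) simp

lemma lspan_subset_lspan_append: "lspan us \<subseteq> lspan (us @ [y])"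
  by (simp add: lspan_eq_fspan fv.span_mono subset_insertI)

lemma mem_lspan_append: "y \<in> lspan (us @ [y])"
  by (simp add: lspan_eq_fspan fv.span_base)

definition lin_functional :: "((nat \<Rightarrow> 'a::field) \<Rightarrow> 'a) \<Rightarrow> bool" where
  "lin_functional f \<longleftrightarrow> (\<forall>a b x y. f (\<lambda>j. a * x j + b * y j) = a * f x + b * f y)"

lemma lin_functional_add: "lin_functional f \<Longrightarrow> f (x + y) = f x + f y"
proof -
  assume "lin_functional f"
  then have "f (\<lambda>j. 1 * x j + 1 * y j) = 1 * f x + 1 * f y"
    unfolding lin_functional_def by blast
  then show ?thesis by (simp add: func_plus)
qed

lemma lin_functional_scale: "lin_functional f \<Longrightarrow> f (fscale c x) = c * f x"
proof -
  assume "lin_functional f"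
  then have "f (\<lambda>j. c * x j + 0 * x j) = c * f x + 0 * f x"
    unfolding lin_functional_def by blast
  then show ?thesis by (simp add: fscale_def)
qed

lemma lin_functional_diff: "lin_functional f \<Longrightarrow> f (x - y) = f x - f y"
proof -
  assume "lin_functional f"
  then have "f (\<lambda>j. 1 * x j + (-1) * y j) = 1 * f x + (-1) * f y"
    unfolding lin_functional_def by blast
  moreover have "(\<lambda>j. 1 * x j + (-1) * y j) = x - y"
    by (auto simp: fun_diff_def)
  ultimately show ?thesis by simp
qed

lemma lin_functional_zero: "lin_functional f \<Longrightarrow> f 0 = 0"
  using lin_functional_scale[of f 0 0] by (simp add: fscale_def func_zero)

lemma lin_functional_comb:
  "lin_functional f \<Longrightarrow> lin_functional g \<Longrightarrow> lin_functional (\<lambda>y. \<alpha> * f y + \<beta> * g y)"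
  unfolding lin_functional_def by (simp add: algebra_simps)

lemma subspace_kernel: "fv.subspace E \<Longrightarrow> lin_functional f \<Longrightarrow> fv.subspace {y\<in>E. f y = 0}"
  unfolding fv.subspace_def by (auto simp: lin_functional_add lin_functional_scale lin_functional_zero)

lemma vsub_kernel:
  assumes E: "vsub n (Suc k) E" and f: "lin_functional f" and y0: "y0 \<in> E" "f y0 \<noteq> 0"
  shows "vsub n k {y\<in>E. f y = 0}"
proof -
  let ?S = "{y\<in>E. f y = 0}"
  have sE: "fv.subspace E" "E \<subseteq> vecs n"
    using vsub_subspace[OF E] by auto
  have sS: "fv.subspace ?S"
    using subspace_kernel[OF sE(1) f] .
  obtain B where B: "B \<subseteq> ?S" "findependent B" "?S \<subseteq> fspan B"
    by (rule fv.basis_exists)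
  have spB: "fspan B = ?S"
    using fv.span_minimal[OF B(1) sS] B(3) by blast
  have ny: "y0 \<notin> fspan B"
    using spB y0 by auto
  have "E \<subseteq> fspan (insert y0 B)"
  proof
    fix y assume y: "y \<in> E"
    have "y - fscale (f y / f y0) y0 \<in> ?S"
      using y y0 f sE(1) by (auto simp: lin_functional_diff lin_functional_scale fv.subspace_def fv.subspace_diff)
    then show "y \<in> fspan (insert y0 B)"
      using spB fv.span_breakdown_eq by blast
  qed
  then have "finite (insert y0 B)" "card (insert y0 B) = Suc k"
    using vsub_basis_card[OF E fv.independent_insertI[OF ny B(2)]] B(1) y0 by auto
  moreover have "y0 \<notin> B"
    using ny fv.span_superset by blast
  ultimately show ?thesis
    unfolding vsub_iff_basis using B(1,2) spB sE(2) by (intro exI[of _ B]) auto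
qed

lemma vsub_Int_nonzero:
  assumes X: "vsub n k X" and Y: "vsub n k' Y" and dim: "Suc n < k + k'"
  shows "\<exists>z\<in>X \<inter> Y. z \<noteq> 0"
proof -
  obtain B where B: "finite B" "card B = k" "B \<subseteq> vecs n" "findependent B" "X = fspan B"
    using X unfolding vsub_iff_basis by blast
  obtain C where C: "finite C" "card C = k'" "C \<subseteq> vecs n" "findependent C" "Y = fspan C"
    using Y unfolding vsub_iff_basis by blast
  show ?thesis
  proof (cases "B \<inter> C = {}")
    case False
    then obtain z where "z \<in> B" "z \<in> C" by blast
    moreover then have "z \<noteq> 0"
      using B(4) fv.dependent_zero by blast
    ultimately show ?thesis
      using B C fv.span_superset by blast
  next
    case True
    have "\<not> findependent (B \<union> C)"
    proof
      assume "findependent (B \<union> C)"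
      then have "card (B \<union> C) \<le> Suc n"
        using vsub_independent_card_le[OF vsub_vecs] B C by blast
      then show False
        using True card_Un_disjoint[OF B(1) C(1)] B C dim by simp
    qed
    then obtain u where u: "\<exists>v\<in>B \<union> C. u v \<noteq> 0" "(\<Sum>v\<in>B \<union> C. fscale (u v) v) = 0"
      using fv.dependent_finite[of "B \<union> C"] B(1) C(1) by auto
    define z where "z = (\<Sum>v\<in>B. fscale (u v) v)"
    have sum: "z + (\<Sum>v\<in>C. fscale (u v) v) = 0"
      using u(2) by (simp only: z_def sum.union_disjoint[OF B(1) C(1) True])
    have "z \<in> X"
      unfolding z_def B(5) by (auto intro!: fv.span_sum fv.span_scale intro: fv.span_base)
    moreover have "z \<in> Y"
    proof -
      have "(\<Sum>v\<in>C. fscale (u v) v) \<in> Y"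
        unfolding C(5) by (auto intro!: fv.span_sum fv.span_scale intro: fv.span_base)
      then have "- (\<Sum>v\<in>C. fscale (u v) v) \<in> Y"
        using C(5) fv.span_neg by blast
      moreover have "z = - (\<Sum>v\<in>C. fscale (u v) v)"
        using sum by (simp add: eq_neg_iff_add_eq_0)
      ultimately show ?thesis by simp
    qed
    moreover have "z \<noteq> 0"
    proof
      assume z0: "z = 0"
      then have "\<forall>v\<in>B. u v = 0"
        using B(1,4) fv.dependent_finite unfolding z_def by blast
      moreover have "\<forall>v\<in>C. u v = 0"
        using sum z0 C(1,4) fv.dependent_finite by auto
      ultimately show False
        using u(1) by blast
    qed
    ultimately show ?thesis by blast
  qed
qed

lemma subspace_subset_if_same_extensions:
  assumes U: "vsub n h U" "U \<subseteq> A" "U \<subseteq> B" and A: "fv.subspace A" "A \<subseteq> vecs n"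
    and ext: "\<And>X. vsub n (Suc h) X \<Longrightarrow> U \<subseteq> X \<Longrightarrow> X \<subseteq> A \<Longrightarrow> X \<subseteq> B"
  shows "A \<subseteq> B"
proof
  fix y assume y: "y \<in> A"
  show "y \<in> B"
  proof (cases "y \<in> U")
    case False
    let ?X = "fspan (insert y U)"
    have "vsub n (Suc h) ?X"
      using vsub_insert[OF U(1) _ False] y A(2) by blast
    moreover have "U \<subseteq> ?X" "y \<in> ?X"
      using fv.span_superset by blast+
    moreover have "?X \<subseteq> A"
      using y U(2) fv.span_minimal[OF _ A(1)] by blast
    ultimately show ?thesis
      using ext by blast
  qed (use U(3) in blast)
qed

lemma hyperplane_eq_if_same_extensions:
  assumes U: "vsub n h U" "h < n" and E: "vsub n n E" "vsub n n E'" "U \<subseteq> E"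
    and ext: "\<And>X. vsub n (Suc h) X \<Longrightarrow> U \<subseteq> X \<Longrightarrow> X \<subseteq> E \<longleftrightarrow> X \<subseteq> E'"
  shows "E = E'"
proof -
  have sE: "fv.subspace E" "E \<subseteq> vecs n" "fv.subspace E'" "E' \<subseteq> vecs n"
    using vsub_subspace E by blast+
  obtain x where x: "x \<in> E" "x \<notin> U"
    using vsub_dim_mono[OF E(1) U(1)] U(2) by (meson not_le subsetI)
  let ?X = "fspan (insert x U)"
  have "vsub n (Suc h) ?X"
    using vsub_insert[OF U(1) _ x(2)] x(1) sE(2) by blast
  moreover have "U \<subseteq> ?X"
    using fv.span_superset by blast
  moreover have "?X \<subseteq> E"
    using x(1) E(3) fv.span_minimal[OF _ sE(1)] by blast
  ultimately have "U \<subseteq> E'"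
    using ext by blast
  then show ?thesis
    using subspace_subset_if_same_extensions[OF U(1) E(3) \<open>U \<subseteq> E'\<close> sE(1,2)]
      subspace_subset_if_same_extensions[OF U(1) \<open>U \<subseteq> E'\<close> E(3) sE(3,4)] ext
    by blast
qed

lemma lin_functional_proportional_if_kernel_subset:
  assumes f: "lin_functional f" and g: "lin_functional g"
    and y0: "y0 \<in> vecs n" "f y0 \<noteq> 0" and ker: "\<And>y. y \<in> vecs n \<Longrightarrow> f y = 0 \<Longrightarrow> g y = 0"
    and y: "y \<in> vecs n"
  shows "g y = (g y0 / f y0) * f y"
proof -
  let ?z = "y - fscale (f y / f y0) y0"
  have "?z \<in> vecs n"
    using y y0 fv.subspace_diff[OF subspace_vecs] fv.subspace_scale[OF subspace_vecs] by blast
  moreover have "f ?z = 0"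
    using y0(2) by (simp add: lin_functional_diff[OF f] lin_functional_scale[OF f])
  ultimately have "g ?z = 0"
    using ker by blast
  then show ?thesis
    using y0(2) by (simp add: lin_functional_diff[OF g] lin_functional_scale[OF g] field_simps)
qed

lemma lin_functional_dual_pair:
  assumes f: "lin_functional f" and g: "lin_functional g"
    and indep: "\<And>s t. s \<noteq> 0 \<or> t \<noteq> 0 \<Longrightarrow> \<exists>y\<in>vecs n. s * f y + t * g y \<noteq> 0"
  obtains y1 y2 where "y1 \<in> vecs n" "y2 \<in> vecs n" "f y1 = 1" "g y1 = 0" "f y2 = 0" "g y2 = 1"
proof -
  obtain p where p: "p \<in> vecs n" "f p \<noteq> 0"
    using indep[of 1 0] by auto
  obtain q where q: "q \<in> vecs n" "- g p * f q + f p * g q \<noteq> 0"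
    using indep[of "- g p" "f p"] p(2) by auto
  define D where "D = f p * g q - g p * f q"
  have D: "D \<noteq> 0"
    using q(2) by (simp add: D_def algebra_simps)
  \<comment> \<open>Cramer's rule for the system with matrix [f p, f q; g p, g q] of determinant D\<close>
  define y1 where "y1 = fscale (g q / D) p + fscale (- g p / D) q"
  define y2 where "y2 = fscale (- f q / D) p + fscale (f p / D) q"
  have "y1 \<in> vecs n" "y2 \<in> vecs n"
    unfolding y1_def y2_def using p(1) q(1)
    by (meson fv.subspace_add fv.subspace_scale subspace_vecs)+
  moreover have "f y1 = (g q * f p - g p * f q) / D" "g y1 = (g q * g p - g p * g q) / D"
      "f y2 = (f p * f q - f q * f p) / D" "g y2 = (f p * g q - f q * g p) / D"
    unfolding y1_def y2_def lin_functional_add[OF f] lin_functional_add[OF g]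
      lin_functional_scale[OF f] lin_functional_scale[OF g]
    using D by (simp_all add: field_simps)
  then have "f y1 = 1" "g y1 = 0" "f y2 = 0" "g y2 = 1"
    using D by (simp_all add: D_def algebra_simps)
  ultimately show ?thesis
    using that by blast
qed

context
  fixes n :: nat and f g :: "(nat \<Rightarrow> 'a::field) \<Rightarrow> 'a" and y1 y2 :: "nat \<Rightarrow> 'a"
  assumes f: "lin_functional f" and g: "lin_functional g"
    and dual: "y1 \<in> vecs n" "y2 \<in> vecs n" "f y1 = 1" "g y1 = 0" "f y2 = 0" "g y2 = 1"
begin

lemma vsub_common_kernel:
  assumes "0 < n"
  shows "vsub n (n - 1) {y\<in>vecs n. f y = 0 \<and> g y = 0}"
proof -
  have "vsub n (Suc (n - 1)) {y\<in>vecs n. f y = 0}"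
    using vsub_kernel[OF vsub_vecs f dual(1)] dual(3) assms by simp
  from vsub_kernel[OF this g, of y2]
  have "vsub n (n - 1) {y\<in>{y\<in>vecs n. f y = 0}. g y = 0}"
    using dual by simp
  also have "{y\<in>{y\<in>vecs n. f y = 0}. g y = 0} = {y\<in>vecs n. f y = 0 \<and> g y = 0}"
    by auto
  finally show ?thesis .
qed

lemma hyperplane_contains_comb_kernel:
  assumes E: "vsub n n E" "{y\<in>vecs n. f y = 0 \<and> g y = 0} \<subseteq> E"
  obtains \<alpha> \<beta> where "\<alpha> \<noteq> 0 \<or> \<beta> \<noteq> 0" "{y\<in>vecs n. \<alpha> * f y + \<beta> * g y = 0} \<subseteq> E"
proof -
  have sE: "fv.subspace E" "E \<subseteq> vecs n"
    using vsub_subspace[OF E(1)] by auto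
  have rest: "y - fscale (f y) y1 - fscale (g y) y2 \<in> E" if "y \<in> vecs n" for y
  proof -
    have "y - fscale (f y) y1 - fscale (g y) y2 \<in> vecs n"
      using that dual(1,2) by (meson fv.subspace_diff fv.subspace_scale subspace_vecs)
    then show ?thesis
      using E(2) dual
      by (auto simp: lin_functional_diff lin_functional_scale f g)
  qed
  show ?thesis
  proof (cases "y1 \<in> E")
    case True
    have "{y\<in>vecs n. 0 * f y + 1 * g y = 0} \<subseteq> E"
    proof
      fix y assume y: "y \<in> {y\<in>vecs n. 0 * f y + 1 * g y = 0}"
      then have "y = (y - fscale (f y) y1 - fscale (g y) y2) + fscale (f y) y1"
        by (intro ext) (simp add: fun_diff_def func_plus)
      moreover have "y \<in> vecs n"
        using y by blast
      ultimately show "y \<in> E"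
        using rest fv.subspace_add[OF sE(1)] fv.subspace_scale[OF sE(1) True] by metis
    qed
    then show ?thesis
      using that[of 0 1] by simp
  next
    case False
    have ins: "vsub n (Suc n) (fspan (insert y1 E))"
      using vsub_insert[OF E(1) dual(1) False] .
    then have "fspan (insert y1 E) = vecs n"
      using vsub_eq_if_subset[OF ins vsub_vecs] vsub_subspace[OF ins] by simp
    then obtain t where "y2 - fscale t y1 \<in> fspan E"
      using dual(2) fv.span_breakdown_eq by blast
    then have t: "y2 - fscale t y1 \<in> E"
      using fv.span_eq_iff sE(1) by blast
    have "{y\<in>vecs n. 1 * f y + t * g y = 0} \<subseteq> E"
    proof
      fix y assume y: "y \<in> {y\<in>vecs n. 1 * f y + t * g y = 0}"
      then have fy: "f y = - (t * g y)"
        by (simp add: add_eq_0_iff)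
      have "y = (y - fscale (f y) y1 - fscale (g y) y2) + fscale (g y) (y2 - fscale t y1)"
        by (intro ext) (simp add: fy fun_diff_def func_plus algebra_simps)
      moreover have "y \<in> vecs n"
        using y by blast
      ultimately show "y \<in> E"
        using rest fv.subspace_add[OF sE(1)] fv.subspace_scale[OF sE(1) t] by metis
    qed
    then show ?thesis
      using that[of 1 t] by simp
  qed
qed

end

lemma eq_zero_if_cross_ne:
  fixes \<alpha> \<beta> s t x y :: "'a::field"
  assumes "\<alpha> * x + \<beta> * y = 0" "s * x + t * y = 0" "\<alpha> * t \<noteq> \<beta> * s"
  shows "x = 0 \<and> y = 0"
proof -
  have "(\<alpha> * t - \<beta> * s) * x = t * (\<alpha> * x + \<beta> * y) - \<beta> * (s * x + t * y)"
    "(\<alpha> * t - \<beta> * s) * y = \<alpha> * (s * x + t * y) - s * (\<alpha> * x + \<beta> * y)"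
    by (simp_all add: algebra_simps)
  then have "(\<alpha> * t - \<beta> * s) * x = 0" "(\<alpha> * t - \<beta> * s) * y = 0"
    using assms(1,2) by simp_all
  then show ?thesis
    using assms(3) by simp
qed

lemma proportional_if_cross_eq:
  fixes \<alpha> \<beta> s t :: "'a::field"
  assumes "\<alpha> * t = \<beta> * s" "s \<noteq> 0 \<or> t \<noteq> 0"
  shows "\<exists>r. \<alpha> = r * s \<and> \<beta> = r * t"
proof (cases "s = 0")
  case True
  then show ?thesis
    using assms by (intro exI[of _ "\<beta> / t"]) auto
next
  case False
  then show ?thesis
    using assms(1) by (intro exI[of _ "\<alpha> / s"]) (simp add: field_simps)
qed

section \<open>The Plucker form of a linear complex\<close>

definition plucker_mat :: "nat \<Rightarrow> (nat \<Rightarrow> 'a::field) list \<Rightarrow> nat set \<Rightarrow> 'a mat" where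
  "plucker_mat h vs I = mat (Suc h) (Suc h) (\<lambda>(i,j). (vs!i) (sorted_list_of_set I ! j))"

lemma plucker_coord_eq_det: "plucker_coord h vs I = det (plucker_mat h vs I)"
proof -
  have "det (plucker_mat h vs I) = (\<Sum>p \<in> {p. p permutes {..h}}. of_int (sign p) *
          (\<Prod>i\<in>{..h}. plucker_mat h vs I $$ (i, p i)))"
    unfolding det_def by (simp add: plucker_mat_def atLeast0LessThan lessThan_Suc_atMost)
  also have "\<dots> = plucker_coord h vs I"
    unfolding plucker_coord_def
  proof (intro sum.cong refl arg_cong2[where f = "(*)"] prod.cong)
    fix p i assume "p \<in> {p. p permutes {..h}}" "i \<in> {..h}"
    then have "p i \<in> {..h}"
      using permutes_in_image by fastforce
    then show "plucker_mat h vs I $$ (i, p i) = (vs ! i) (sorted_list_of_set I ! p i)"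
      using \<open>i \<in> {..h}\<close> by (simp add: plucker_mat_def)
  qed
  finally show ?thesis by simp
qed

definition plucker_form :: "nat \<Rightarrow> nat \<Rightarrow> (nat set \<Rightarrow> 'a::field) \<Rightarrow> (nat \<Rightarrow> 'a) list \<Rightarrow> 'a" where
  "plucker_form n h c vs = (\<Sum>I\<in>plucker_index n h. c I * plucker_coord h vs I)"

lemma sum_if_less_atLeast0LessThan:
  "(\<Sum>l\<in>{0..<m::nat}. if l < k then g l else 0) = (\<Sum>l\<in>{0..<min k m}. g l)"
  by (induction m) (auto simp: min_def not_less le_Suc_eq)

lemma plucker_mat_append_lincomb:
  assumes len: "length ws = k" "length us = k" "length ys + k = Suc h"
    and co: "\<And>i. i < k \<Longrightarrow> ws!i = lincomb us (co i)"
  shows "plucker_mat h (ws@ys) I =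
    mat (Suc h) (Suc h) (\<lambda>(i,j). if i < k then (if j < k then co i j else 0) else of_bool (i = j))
      * plucker_mat h (us@ys) I"
    (is "_ = ?A * _")
proof (rule eq_matI)
  fix i j assume "i < dim_row (?A * plucker_mat h (us@ys) I)" "j < dim_col (?A * plucker_mat h (us@ys) I)"
  then have ij: "i < Suc h" "j < Suc h"
    by (auto simp: plucker_mat_def)
  let ?s = "sorted_list_of_set I ! j"
  have "(?A * plucker_mat h (us@ys) I) $$ (i,j) = (\<Sum>l\<in>{0..<Suc h}. ?A $$ (i,l) * ((us@ys)!l) ?s)"
    using ij by (simp add: plucker_mat_def scalar_prod_def)
  also have "\<dots> = ((ws@ys)!i) ?s"
  proof (cases "i < k")
    case True
    have "(\<Sum>l\<in>{0..<Suc h}. ?A $$ (i,l) * ((us@ys)!l) ?s) =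
          (\<Sum>l\<in>{0..<Suc h}. if l < k then co i l * (us!l) ?s else 0)"
      by (rule sum.cong) (use True len in \<open>auto simp: nth_append\<close>)
    also have "\<dots> = (\<Sum>l\<in>{0..<k}. co i l * (us!l) ?s)"
      using len(3) by (simp only: sum_if_less_atLeast0LessThan) (simp add: min_absorb1)
    also have "\<dots> = (ws!i) ?s"
      using co[OF True] len by (simp add: lincomb_def atLeast0LessThan)
    finally show ?thesis
      using True len by (simp add: nth_append)
  next
    case False
    have "(\<Sum>l\<in>{0..<Suc h}. ?A $$ (i,l) * ((us@ys)!l) ?s) =
          (\<Sum>l\<in>{0..<Suc h}. if l = i then ((us@ys)!i) ?s else 0)"
      by (rule sum.cong) (use False ij in \<open>auto\<close>)
    then show ?thesis
      using False ij len by (simp add: nth_append)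
  qed
  finally show "plucker_mat h (ws@ys) I $$ (i,j) = (?A * plucker_mat h (us@ys) I) $$ (i,j)"
    using ij by (simp add: plucker_mat_def)
qed (auto simp: plucker_mat_def)

lemma plucker_form_append_span:
  assumes len: "length ws = k" "length us = k" and sub: "set ws \<subseteq> lspan us"
  obtains d where "\<And>ys. length ys + k = Suc h \<Longrightarrow> plucker_form n h c (ws@ys) = d * plucker_form n h c (us@ys)"
proof -
  have "\<forall>i. i < k \<longrightarrow> (\<exists>a. ws!i = lincomb us a)"
    using sub len unfolding lspan_def by (auto simp: set_conv_nth)
  then obtain co where co: "\<And>i. i < k \<Longrightarrow> ws!i = lincomb us (co i)"
    by metis
  define A :: "'a mat" where
    "A = mat (Suc h) (Suc h) (\<lambda>(i,j). if i < k then (if j < k then co i j else 0) else of_bool (i = j))"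
  have "plucker_form n h c (ws@ys) = det A * plucker_form n h c (us@ys)"
    if ys: "length ys + k = Suc h" for ys
  proof -
    have "plucker_coord h (ws@ys) I = det A * plucker_coord h (us@ys) I" for I
    proof -
      have "plucker_mat h (ws@ys) I = A * plucker_mat h (us@ys) I"
        unfolding A_def by (rule plucker_mat_append_lincomb[OF len ys co])
      then show ?thesis
        unfolding plucker_coord_eq_det by (simp add: det_mult[of _ "Suc h"] A_def plucker_mat_def)
    qed
    then show ?thesis
      unfolding plucker_form_def by (simp add: sum_distrib_left algebra_simps)
  qed
  then show ?thesis
    using that by blast
qed

lemma plucker_coord_linear_nth:
  assumes k: "k \<le> h" and l: "length vs = Suc h"
  shows "plucker_coord h (vs[k := (\<lambda>j. a * x j + b * y j)]) I
       = a * plucker_coord h (vs[k := x]) I + b * plucker_coord h (vs[k := y]) I"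
proof -
  let ?s = "sorted_list_of_set I"
  have P: "(\<Prod>i\<le>h. (vs[k:=f]!i) (?s ! p i)) = f (?s ! p k) * (\<Prod>i\<in>{..h}-{k}. (vs!i) (?s ! p i))"
    for f p
    using k l by (subst prod.remove[of _ k]) (auto intro!: prod.cong simp: nth_list_update)
  show ?thesis
    unfolding plucker_coord_def P by (simp add: sum_distrib_left sum.distrib algebra_simps)
qed

lemma plucker_form_linear_nth:
  assumes "k \<le> h" "length vs = Suc h"
  shows "plucker_form n h c (vs[k := (\<lambda>j. a * x j + b * y j)])
       = a * plucker_form n h c (vs[k := x]) + b * plucker_form n h c (vs[k := y])"
  unfolding plucker_form_def plucker_coord_linear_nth[OF assms]
  by (simp add: sum_distrib_left sum.distrib algebra_simps)

lemma lin_functional_plucker_form_last: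
  assumes "length us = h"
  shows "lin_functional (\<lambda>y. plucker_form n h c (us @ [y]))"
  unfolding lin_functional_def
proof (intro allI)
  fix a b x y
  show "plucker_form n h c (us @ [\<lambda>j. a * x j + b * y j])
      = a * plucker_form n h c (us @ [x]) + b * plucker_form n h c (us @ [y])"
    using plucker_form_linear_nth[where k = h and vs = "us @ [x]" and n = n and c = c and a = a and b = b
        and x = x and y = y] assms
    by (simp add: list_update_append)
qed

lemma plucker_form_linear_penultimate:
  assumes "Suc (length vs) = h"
  shows "plucker_form n h c (vs @ [\<lambda>j. a * x j + b * y j, z])
       = a * plucker_form n h c (vs @ [x, z]) + b * plucker_form n h c (vs @ [y, z])"
  using plucker_form_linear_nth[where k = "length vs" and vs = "vs @ [x, z]" and n = n and c = c
      and a = a and b = b and x = x and y = y] assms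
  by (simp add: list_update_append)

lemma plucker_coord_unit_vecs:
  assumes I: "I \<in> plucker_index n h" and J: "J \<in> plucker_index n h"
  shows "plucker_coord h (map unit_vec (sorted_list_of_set I)) J = of_bool (J = I)"
proof -
  let ?s = "sorted_list_of_set I"
  let ?vs = "map unit_vec ?s :: (nat \<Rightarrow> 'a) list"
  have fI: "finite I" "card I = Suc h" and fJ: "finite J" "card J = Suc h"
    using I J by (auto simp: plucker_index_def finite_subset)
  show ?thesis
  proof (cases "J = I")
    case True
    have "plucker_mat h ?vs I = 1\<^sub>m (Suc h)"
    proof (rule eq_matI)
      fix i j assume "i < dim_row (1\<^sub>m (Suc h) :: 'a mat)" "j < dim_col (1\<^sub>m (Suc h) :: 'a mat)"
      then have ij: "i < Suc h" "j < Suc h" by auto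
      then have "(?s ! j = ?s ! i) = (j = i)"
        using fI nth_eq_iff_index_eq[of ?s] by (metis distinct_sorted_list_of_set length_sorted_list_of_set)
      then show "plucker_mat h ?vs I $$ (i, j) = 1\<^sub>m (Suc h) $$ (i, j)"
        using ij fI by (simp add: plucker_mat_def unit_vec_def)
    qed (auto simp: plucker_mat_def)
    then show ?thesis
      using True by (simp add: plucker_coord_eq_det)
  next
    case False
    then obtain x where x: "x \<in> I" "x \<notin> J"
      using fI fJ card_subset_eq by (metis subsetI)
    then obtain i where i: "i < Suc h" "?s ! i = x"
      using fI by (metis in_set_conv_nth length_sorted_list_of_set set_sorted_list_of_set)
    have "(\<Prod>i'\<le>h. (?vs ! i') (sorted_list_of_set J ! p i')) = 0" if p: "p permutes {..h}" for p
    proof -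
      have "p i \<le> h"
        using permutes_in_image[OF p] i by simp
      then have "sorted_list_of_set J ! p i \<in> J"
        using fJ by (metis le_imp_less_Suc length_sorted_list_of_set nth_mem set_sorted_list_of_set)
      then have "(?vs ! i) (sorted_list_of_set J ! p i) = 0"
        using x i fI by (auto simp: unit_vec_def)
      then show ?thesis
        using i by (intro prod_zero) auto
    qed
    then show ?thesis
      using False unfolding plucker_coord_def by (simp add: sum.neutral)
  qed
qed

lemma plucker_form_nonzero_exists:
  assumes "\<exists>I\<in>plucker_index n h. c I \<noteq> 0"
  obtains vs where "length vs = Suc h" "set vs \<subseteq> vecs n" "lindep_free vs"
    "plucker_form n h c vs \<noteq> (0::'a::field)"
proof -
  obtain I where I: "I \<in> plucker_index n h" "c I \<noteq> 0"
    using assms by blast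
  have fI: "finite I" "I \<subseteq> {..n}" "card I = Suc h"
    using I(1) by (auto simp: plucker_index_def finite_subset)
  let ?vs = "map unit_vec (sorted_list_of_set I) :: (nat \<Rightarrow> 'a) list"
  have "set ?vs \<subseteq> unit_vec ` {..n}"
    using fI by auto
  then have "lindep_free ?vs"
    using fv.independent_mono[OF independent_unit_vecs] inj_on_subset[OF inj_unit_vec]
    by (auto simp: lindep_free_iff_independent distinct_map fI(1))
  moreover have "set ?vs \<subseteq> vecs n"
    using fI by (auto simp: vecs_def unit_vec_def)
  moreover have "plucker_form n h c ?vs = c I"
  proof -
    have "plucker_form n h c ?vs = (\<Sum>J\<in>plucker_index n h. if J = I then c I else 0)"
      unfolding plucker_form_def by (rule sum.cong) (auto simp: plucker_coord_unit_vecs[OF I(1)])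
    moreover have "finite (plucker_index n h)"
      by (rule finite_subset[of _ "Pow {..n}"]) (auto simp: plucker_index_def)
    ultimately show ?thesis
      using I(1) by simp
  qed
  ultimately show ?thesis
    using that[of ?vs] I(2) fI by simp
qed

section \<open>Polarity of a linear complex\<close>

locale plucker_complex =
  fixes n h :: nat and c :: "nat set \<Rightarrow> 'a::field"
  assumes h_pos: "1 \<le> h" and h_less: "h < n" and c_nonzero: "\<exists>I\<in>plucker_index n h. c I \<noteq> 0"
begin

abbreviation V :: "(nat \<Rightarrow> 'a) set" where "V \<equiv> vecs n"

abbreviation \<phi> :: "(nat \<Rightarrow> 'a) list \<Rightarrow> 'a" where "\<phi> \<equiv> plucker_form n h c"

definition Kc :: "(nat \<Rightarrow> 'a) set set" where
  "Kc = {X. \<exists>vs. length vs = h + 1 \<and> set vs \<subseteq> V \<and> lindep_free vs \<and> X = lspan vs \<and>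
                     (\<Sum>I\<in>plucker_index n h. c I * plucker_coord h vs I) = 0}"

lemma lspan_in_Kc_iff:
  assumes "length ws = Suc h" "set ws \<subseteq> V" "lindep_free ws"
  shows "lspan ws \<in> Kc \<longleftrightarrow> \<phi> ws = 0"
proof
  assume "lspan ws \<in> Kc"
  then obtain vs where vs: "length vs = Suc h" "lspan ws = lspan vs" "\<phi> vs = 0"
    unfolding Kc_def plucker_form_def by auto
  have "set ws \<subseteq> lspan vs"
    using vs(2) fv.span_superset[of "set ws"] by (simp add: lspan_eq_fspan)
  then obtain d where "\<phi> (ws @ []) = d * \<phi> (vs @ [])"
    using plucker_form_append_span[of ws "Suc h" vs] assms(1) vs(1) by (metis list.size(3) add_0)
  then show "\<phi> ws = 0"
    using vs(3) by simp
next
  assume "\<phi> ws = 0"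
  then show "lspan ws \<in> Kc"
    unfolding Kc_def plucker_form_def using assms by auto
qed

lemma plucker_form_append_mem_lspan:
  assumes l: "length us = h" and u: "u \<in> lspan us"
  shows "\<phi> (us @ [u]) = 0"
proof -
  have "set (us @ [u]) \<subseteq> lspan (us @ [0])"
    using u fv.span_superset fv.span_mono[of "set us" "insert 0 (set us)"] by (auto simp: lspan_eq_fspan)
  then obtain d where "\<phi> ((us @ [u]) @ []) = d * \<phi> ((us @ [0]) @ [])"
    using plucker_form_append_span[of "us @ [u]" "Suc h" "us @ [0]"] l by (metis list.size(3) add_0 length_append_singleton)
  moreover have "\<phi> (us @ [0]) = 0"
    using lin_functional_zero[OF lin_functional_plucker_form_last[OF l]] .
  ultimately show ?thesis by simp
qed

lemma extension_in_Kc_iff: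
  assumes us: "length us = h" "set us \<subseteq> V" "lindep_free us"
    and X: "vsub n (Suc h) X" "lspan us \<subseteq> X"
  shows "X \<in> Kc \<longleftrightarrow> (\<forall>x\<in>X. \<phi> (us @ [x]) = 0)"
proof -
  obtain x0 where x0: "x0 \<in> X" "x0 \<notin> lspan us"
    using vsub_dim_mono[OF X(1) vsub_lspan[OF us]] X(2) by (metis Suc_n_not_le_n subsetI)
  have sX: "fv.subspace X" "X \<subseteq> V"
    using vsub_subspace[OF X(1)] by auto
  have ind: "lindep_free (us @ [x0])"
    using lindep_free_append[OF us(3) x0(2)] .
  have "X = lspan (us @ [x0])"
    using vsub_eq_if_subset[OF vsub_lspan_append[OF us _ x0(2)] X(1) lspan_append_subset[OF sX(1) X(2) x0(1)]]
      x0(1) sX(2) by auto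
  then have KX: "X \<in> Kc \<longleftrightarrow> \<phi> (us @ [x0]) = 0"
    using lspan_in_Kc_iff[of "us @ [x0]"] us x0(1) sX(2) ind by auto
  have L: "lin_functional (\<lambda>y. \<phi> (us @ [y]))"
    using lin_functional_plucker_form_last[OF us(1)] .
  have "\<phi> (us @ [x]) = 0" if "\<phi> (us @ [x0]) = 0" "x \<in> X" for x
  proof -
    have "x \<in> fspan (insert x0 (set us))"
      using \<open>X = lspan (us @ [x0])\<close> that(2) by (simp add: lspan_eq_fspan)
    then obtain t where t: "x - fscale t x0 \<in> lspan us"
      unfolding fv.span_breakdown_eq lspan_eq_fspan by blast
    have "x = (x - fscale t x0) + fscale t x0"
      by simp
    then have "\<phi> (us @ [x]) = \<phi> (us @ [x - fscale t x0]) + t * \<phi> (us @ [x0])"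
      by (metis lin_functional_add[OF L] lin_functional_scale[OF L])
    then show ?thesis
      using plucker_form_append_mem_lspan[OF us(1) t] that(1) by simp
  qed
  then show ?thesis
    using KX x0(1) by blast
qed

lemma singular_Kc_iff:
  assumes us: "length us = h" "set us \<subseteq> V" "lindep_free us"
  shows "singular n h Kc (lspan us) \<longleftrightarrow> (\<forall>y\<in>V. \<phi> (us @ [y]) = 0)"
proof
  assume S: "singular n h Kc (lspan us)"
  show "\<forall>y\<in>V. \<phi> (us @ [y]) = 0"
  proof
    fix y assume y: "y \<in> V"
    show "\<phi> (us @ [y]) = 0"
    proof (cases "y \<in> lspan us")
      case False
      note X = vsub_lspan_append[OF us y False] lspan_subset_lspan_append[of us y]
      then have "lspan (us @ [y]) \<in> Kc"
        using S unfolding singular_def by auto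
      then show ?thesis
        using extension_in_Kc_iff[OF us X] mem_lspan_append by blast
    qed (use plucker_form_append_mem_lspan us in blast)
  qed
next
  assume A: "\<forall>y\<in>V. \<phi> (us @ [y]) = 0"
  show "singular n h Kc (lspan us)"
    unfolding singular_def
  proof (intro conjI allI impI vsub_lspan[OF us])
    fix X assume X: "vsub n (h + 1) X \<and> lspan us \<subseteq> X"
    then have "X \<subseteq> V"
      using vsub_subspace by blast
    then show "X \<in> Kc"
      using extension_in_Kc_iff[OF us] X A by auto
  qed
qed

lemma lspan_nonsingular_iff:
  assumes us: "length us = h" "set us \<subseteq> V" "lindep_free us"
  shows "lspan us \<in> nonsingular n h Kc \<longleftrightarrow> (\<exists>y\<in>V. \<phi> (us @ [y]) \<noteq> 0)"
  unfolding nonsingular_def using singular_Kc_iff[OF us] vsub_lspan[OF us] by simp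

lemma polar_lspan:
  assumes us: "length us = h" "set us \<subseteq> V" "lindep_free us"
    and y0: "y0 \<in> V" "\<phi> (us @ [y0]) \<noteq> 0"
  shows "polar n h Kc (lspan us) = {y\<in>V. \<phi> (us @ [y]) = 0}"
    and "vsub n n {y\<in>V. \<phi> (us @ [y]) = 0}"
proof -
  let ?E = "{y\<in>V. \<phi> (us @ [y]) = 0}"
  let ?U = "lspan us"
  show vE: "vsub n n ?E"
    using vsub_kernel[OF vsub_vecs lin_functional_plucker_form_last[OF us(1)] y0] .
  have UE: "?U \<subseteq> ?E"
    using plucker_form_append_mem_lspan[OF us(1)] vsub_subspace[OF vsub_lspan[OF us]] by auto
  have char: "X \<in> Kc \<longleftrightarrow> X \<subseteq> ?E" if "vsub n (Suc h) X" "?U \<subseteq> X" for X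
    using extension_in_Kc_iff[OF us that] vsub_subspace[OF that(1)] by auto
  show "polar n h Kc ?U = ?E"
    unfolding polar_def
  proof (rule the_equality)
    fix E' assume E': "vsub n n E' \<and> (\<forall>X. vsub n (h + 1) X \<and> ?U \<subseteq> X \<longrightarrow> (X \<in> Kc \<longleftrightarrow> X \<subseteq> E'))"
    show "E' = ?E"
      using hyperplane_eq_if_same_extensions[OF vsub_lspan[OF us] h_less vE _ UE, of E'] E' char
      by simp
  qed (use vE char in simp)
qed

lemma nonsingularE:
  assumes U: "U \<in> nonsingular n h Kc"
  obtains us y0 where "length us = h" "set us \<subseteq> V" "lindep_free us" "U = lspan us"
    "y0 \<in> V" "\<phi> (us @ [y0]) \<noteq> 0"
proof -
  obtain us where us: "length us = h" "set us \<subseteq> V" "lindep_free us" "U = lspan us"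
    using U unfolding nonsingular_def vsub_def by blast
  moreover obtain y0 where "y0 \<in> V" "\<phi> (us @ [y0]) \<noteq> 0"
    using lspan_nonsingular_iff[OF us(1-3)] U us(4) by blast
  ultimately show ?thesis
    using that by blast
qed

lemma vsub_polar:
  assumes "U \<in> nonsingular n h Kc"
  shows "vsub n n (polar n h Kc U)"
proof -
  obtain us y0 where us: "length us = h" "set us \<subseteq> V" "lindep_free us" "U = lspan us"
    and y0: "y0 \<in> V" "\<phi> (us @ [y0]) \<noteq> 0"
    using assms by (rule nonsingularE)
  show ?thesis
    using polar_lspan[OF us(1-3) y0] us(4) by simp
qed

lemma subset_polar:
  assumes "U \<in> nonsingular n h Kc"
  shows "U \<subseteq> polar n h Kc U"
proof -
  obtain us y0 where us: "length us = h" "set us \<subseteq> V" "lindep_free us" "U = lspan us"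
    and y0: "y0 \<in> V" "\<phi> (us @ [y0]) \<noteq> 0"
    using assms by (rule nonsingularE)
  have "U \<subseteq> V"
    using vsub_subspace[OF vsub_lspan[OF us(1-3)]] us(4) by simp
  then show ?thesis
    using polar_lspan(1)[OF us(1-3) y0] us(4) plucker_form_append_mem_lspan[OF us(1)] by auto
qed

end

context plucker_complex
begin

lemma nonsingular_nonempty: "nonsingular n h Kc \<noteq> {}"
proof -
  obtain vs where vs: "length vs = Suc h" "set vs \<subseteq> V" "lindep_free vs" "\<phi> vs \<noteq> 0"
    using plucker_form_nonzero_exists[OF c_nonzero] by blast
  define us where "us = take h vs"
  have vs_eq: "vs = us @ [vs ! h]"
    using vs(1) unfolding us_def by (metis lessI take_Suc_conv_app_nth take_all order_refl)
  have "set us \<subseteq> set vs"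
    unfolding us_def by (rule set_take_subset)
  then have "length us = h" "set us \<subseteq> V" "lindep_free us" "vs ! h \<in> V"
    using vs(1-3) fv.independent_mono[of "set vs" "set us"] unfolding lindep_free_iff_independent
    by (auto simp: us_def)
  then have "lspan us \<in> nonsingular n h Kc"
    using lspan_nonsingular_iff vs(4) vs_eq by metis
  then show ?thesis
    by blast
qed

lemma exists_nonsingular_polar_not_superset:
  assumes W: "vsub n k W" and dim: "Suc n < Suc h + k"
  shows "\<exists>U\<in>nonsingular n h Kc. \<not> W \<subseteq> polar n h Kc U"
proof -
  obtain vs where vs: "length vs = Suc h" "set vs \<subseteq> V" "lindep_free vs" "\<phi> vs \<noteq> 0"
    using plucker_form_nonzero_exists[OF c_nonzero] by blast
  have X: "vsub n (Suc h) (lspan vs)"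
    using vsub_lspan[OF vs(1-3)] .
  obtain z where z: "z \<in> lspan vs" "z \<in> W" "z \<noteq> 0"
    using vsub_Int_nonzero[OF X W dim] by blast
  have "{z} \<subseteq> lspan vs" "findependent {z}"
    using z(1,3) fv.dependent_single by auto
  then obtain B where B: "{z} \<subseteq> B" "B \<subseteq> lspan vs" "findependent B" "finite B" "card B = Suc h"
      "lspan vs = fspan B"
    by (rule vsub_extend_basis[OF X])
  obtain us where us: "set us = B - {z}" "distinct us"
    using finite_distinct_list[of "B - {z}"] B(4) by blast
  have sV: "lspan vs \<subseteq> V"
    using vsub_subspace[OF X] by blast
  have us_props: "length us = h" "set us \<subseteq> V" "lindep_free us" "lindep_free (us @ [z])"
    using us B sV distinct_card[OF us(2)] fv.independent_mono[OF B(3)]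
    by (auto simp: card_Diff_singleton lindep_free_iff_independent insert_absorb)
  have "lspan (us @ [z]) = lspan vs"
    using us(1) B(1,6) by (simp add: lspan_eq_fspan insert_absorb)
  then have nz: "\<phi> (us @ [z]) \<noteq> 0"
    using lspan_in_Kc_iff[OF vs(1-3)] lspan_in_Kc_iff[of "us @ [z]"] us_props z(1) sV vs(4) by auto
  then have "lspan us \<in> nonsingular n h Kc"
    using lspan_nonsingular_iff[OF us_props(1-3)] z(1) sV by blast
  moreover have "z \<notin> polar n h Kc (lspan us)"
    using polar_lspan(1)[OF us_props(1-3) _ nz] z(1) sV nz by blast
  ultimately show ?thesis
    using z(2) by blast
qed

lemma dual_span_dim_polar: "h \<le> dual_span_dim n (polar n h Kc ` nonsingular n h Kc)"
proof -
  let ?S = "polar n h Kc ` nonsingular n h Kc"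
  have "dual_subspace n n {E. vsub n n E \<and> {0} \<subseteq> E}"
    unfolding dual_subspace_def using vsub_zero[of n] by auto
  moreover have "?S \<subseteq> {E. vsub n n E \<and> {0} \<subseteq> E}"
    using vsub_polar vsub_subspace fv.subspace_0 by blast
  ultimately have ex: "\<exists>m T. dual_subspace n m T \<and> ?S \<subseteq> T"
    by blast
  have main: "h \<le> m" if T: "dual_subspace n m T" "?S \<subseteq> T" for m T
  proof (rule ccontr)
    assume "\<not> h \<le> m"
    moreover obtain W where W: "m \<le> n" "vsub n (n - m) W" "T = {E. vsub n n E \<and> W \<subseteq> E}"
      using T(1) unfolding dual_subspace_def by blast
    ultimately have "Suc n < Suc h + (n - m)"
      by linarith
    then obtain U where "U \<in> nonsingular n h Kc" "\<not> W \<subseteq> polar n h Kc U"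
      using exists_nonsingular_polar_not_superset[OF W(2)] by blast
    then show False
      using T(2) W(3) by blast
  qed
  show ?thesis
    unfolding dual_span_dim_def by (rule LeastI2_ex[OF ex]) (use main in blast)
qed

end


section \<open>The polar map on a pencil of (h-1)-subspaces\<close>

lemma exactly_one_line_case:
  assumes "l \<noteq> {}"
    and "(l \<subseteq> D \<and> f ` l \<in> L2 \<and> inj_on f l) \<or> ((\<exists>p. f ` (l \<inter> D) = {p}) \<and> (\<exists>q. l - D = {q})) \<or> l \<inter> D = {}"
  shows "let c1 = (l \<subseteq> D \<and> f ` l \<in> L2 \<and> inj_on f l);
            c2 = ((\<exists>p. f ` (l \<inter> D) = {p}) \<and> (\<exists>q. l - D = {q}));
            c3 = (l \<inter> D = {})
        in (c1 \<and> \<not> c2 \<and> \<not> c3) \<or> (\<not> c1 \<and> c2 \<and> \<not> c3) \<or> (\<not> c1 \<and> \<not> c2 \<and> c3)"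
  using assms unfolding Let_def by blast

text \<open>The pencil of (h-1)-subspaces between span vs and span (vs @ [a, b]) is parametrised by
  the homogeneous coordinates (\<alpha>, \<beta>) of the vector \<alpha> a + \<beta> b.\<close>

locale pencil = plucker_complex n h c for n h and c :: "nat set \<Rightarrow> 'a::field" +
  fixes vs :: "(nat \<Rightarrow> 'a) list" and a b :: "nat \<Rightarrow> 'a"
  assumes length_vs: "Suc (length vs) = h"
    and set_vs_ab: "set (vs @ [a, b]) \<subseteq> vecs n" and lindep_free_vs_ab: "lindep_free (vs @ [a, b])"
begin

abbreviation comb :: "'a \<Rightarrow> 'a \<Rightarrow> nat \<Rightarrow> 'a" where
  "comb \<alpha> \<beta> \<equiv> (\<lambda>j. \<alpha> * a j + \<beta> * b j)"

definition pt :: "'a \<Rightarrow> 'a \<Rightarrow> (nat \<Rightarrow> 'a) set" where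
  "pt \<alpha> \<beta> = lspan (vs @ [comb \<alpha> \<beta>])"

definition line :: "(nat \<Rightarrow> 'a) set set" where
  "line = {X. vsub n h X \<and> lspan vs \<subseteq> X \<and> X \<subseteq> lspan (vs @ [a, b])}"

definition fa :: "(nat \<Rightarrow> 'a) \<Rightarrow> 'a" where
  "fa y = \<phi> (vs @ [a, y])"

definition fb :: "(nat \<Rightarrow> 'a) \<Rightarrow> 'a" where
  "fb y = \<phi> (vs @ [b, y])"

abbreviation singular_coords :: "'a \<Rightarrow> 'a \<Rightarrow> bool" where
  "singular_coords \<alpha> \<beta> \<equiv> \<forall>y\<in>V. \<alpha> * fa y + \<beta> * fb y = 0"

lemma pencil_basics:
  "distinct vs" "a \<notin> set vs" "b \<notin> set vs" "a \<noteq> b" "findependent (insert a (insert b (set vs)))"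
  "a \<in> V" "b \<in> V" "set vs \<subseteq> V"
  using lindep_free_vs_ab set_vs_ab unfolding lindep_free_iff_independent by auto

lemma lindep_free_vs: "lindep_free vs"
  using pencil_basics(1) fv.independent_mono[OF pencil_basics(5)]
  by (auto simp: lindep_free_iff_independent)

lemma comb_eq: "comb \<alpha> \<beta> = fscale \<alpha> a + fscale \<beta> b"
  by (rule ext) (simp add: func_plus)

lemma comb_in_subspace: "fv.subspace S \<Longrightarrow> a \<in> S \<Longrightarrow> b \<in> S \<Longrightarrow> comb \<alpha> \<beta> \<in> S"
  unfolding comb_eq by (intro fv.subspace_add fv.subspace_scale)

lemma comb_in_lspan_vs_imp_zero:
  assumes "comb \<alpha> \<beta> \<in> lspan vs"
  shows "\<alpha> = 0 \<and> \<beta> = 0"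
proof -
  let ?B = "insert a (insert b (set vs))"
  have ia: "a \<notin> fspan (?B - {a})" and ib: "b \<notin> fspan (?B - {b})"
    using pencil_basics(5) unfolding fv.dependent_def by blast+
  have span_vs: "fspan (set vs) \<subseteq> fspan (?B - {a})" "fspan (set vs) \<subseteq> fspan (?B - {b})"
    using pencil_basics(2,3) by (intro fv.span_mono, blast)+
  have "comb \<alpha> \<beta> \<in> fspan (?B - {a})" "comb \<alpha> \<beta> \<in> fspan (?B - {b})"
    using assms span_vs unfolding lspan_eq_fspan by blast+
  have \<alpha>: "\<alpha> = 0"
  proof (rule ccontr)
    assume "\<alpha> \<noteq> 0"
    then have "a = fscale (1/\<alpha>) (comb \<alpha> \<beta> - fscale \<beta> b)"
      by (intro ext) (simp add: fun_diff_def field_simps)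
    moreover have "b \<in> fspan (?B - {a})"
      using pencil_basics(4) by (intro fv.span_base) auto
    then have "fscale (1/\<alpha>) (comb \<alpha> \<beta> - fscale \<beta> b) \<in> fspan (?B - {a})"
      using \<open>comb \<alpha> \<beta> \<in> fspan (?B - {a})\<close> by (intro fv.span_scale fv.span_diff)
    ultimately show False
      using ia by simp
  qed
  have "\<beta> = 0"
  proof (rule ccontr)
    assume "\<beta> \<noteq> 0"
    then have "b = fscale (1/\<beta>) (comb \<alpha> \<beta>)"
      using \<alpha> by (intro ext) (simp add: field_simps)
    moreover have "fscale (1/\<beta>) (comb \<alpha> \<beta>) \<in> fspan (?B - {b})"
      using \<open>comb \<alpha> \<beta> \<in> fspan (?B - {b})\<close> by (rule fv.span_scale)
    ultimately show False
      using ib by simp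
  qed
  then show ?thesis
    using \<alpha> by simp
qed

lemma pt_basis:
  assumes "\<alpha> \<noteq> 0 \<or> \<beta> \<noteq> 0"
  shows "length (vs @ [comb \<alpha> \<beta>]) = h" "set (vs @ [comb \<alpha> \<beta>]) \<subseteq> V"
    "lindep_free (vs @ [comb \<alpha> \<beta>])"
proof -
  show "length (vs @ [comb \<alpha> \<beta>]) = h"
    using length_vs by simp
  show "set (vs @ [comb \<alpha> \<beta>]) \<subseteq> V"
    using comb_in_subspace[OF subspace_vecs pencil_basics(6,7)] pencil_basics(8) by simp
  have "comb \<alpha> \<beta> \<notin> lspan vs"
    using comb_in_lspan_vs_imp_zero assms by blast
  then show "lindep_free (vs @ [comb \<alpha> \<beta>])"
    by (rule lindep_free_append[OF lindep_free_vs])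
qed

lemma vsub_pt: "\<alpha> \<noteq> 0 \<or> \<beta> \<noteq> 0 \<Longrightarrow> vsub n h (pt \<alpha> \<beta>)"
  unfolding pt_def by (rule vsub_lspan[OF pt_basis])

lemma subspace_lspan_vs_ab: "fv.subspace (lspan (vs @ [a, b]))"
  by (simp add: lspan_eq_fspan)

lemma pt_in_line:
  assumes "\<alpha> \<noteq> 0 \<or> \<beta> \<noteq> 0"
  shows "pt \<alpha> \<beta> \<in> line"
proof -
  have "lspan vs \<subseteq> pt \<alpha> \<beta>"
    unfolding pt_def by (rule lspan_subset_lspan_append)
  moreover have "lspan vs \<subseteq> lspan (vs @ [a, b])" "a \<in> lspan (vs @ [a, b])" "b \<in> lspan (vs @ [a, b])"
    unfolding lspan_eq_fspan by (auto intro: fv.span_base fv.span_mono[of "set vs", THEN subsetD])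
  then have "pt \<alpha> \<beta> \<subseteq> lspan (vs @ [a, b])"
    unfolding pt_def by (intro lspan_append_subset subspace_lspan_vs_ab comb_in_subspace)
  ultimately show ?thesis
    unfolding line_def using vsub_pt[OF assms] by blast
qed

lemma lineE:
  assumes X: "X \<in> line"
  obtains \<alpha> \<beta> where "\<alpha> \<noteq> 0 \<or> \<beta> \<noteq> 0" "X = pt \<alpha> \<beta>"
proof -
  have X': "vsub n h X" "lspan vs \<subseteq> X" "X \<subseteq> lspan (vs @ [a, b])"
    using X unfolding line_def by auto
  have sX: "fv.subspace X"
    using vsub_subspace[OF X'(1)] by blast
  have "\<not> X \<subseteq> lspan vs"
    using vsub_dim_mono[OF X'(1) vsub_lspan[OF refl pencil_basics(8) lindep_free_vs]] length_vs by auto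
  then obtain x where x: "x \<in> X" "x \<notin> lspan vs"
    by blast
  have "x \<in> fspan (insert a (insert b (set vs)))"
    using x X'(3) by (auto simp: lspan_eq_fspan)
  then obtain \<alpha> \<beta> where v: "(x - fscale \<alpha> a) - fscale \<beta> b \<in> lspan vs"
    unfolding fv.span_breakdown_eq lspan_eq_fspan by blast
  let ?v = "(x - fscale \<alpha> a) - fscale \<beta> b"
  have nz: "\<alpha> \<noteq> 0 \<or> \<beta> \<noteq> 0"
    using v x(2) by (auto simp: fscale_def fun_diff_def)
  have comb: "comb \<alpha> \<beta> = x - ?v"
    by (rule ext) (simp add: fun_diff_def)
  have "?v \<in> X"
    using v X'(2) by blast
  then have "comb \<alpha> \<beta> \<in> X"
    unfolding comb by (rule fv.subspace_diff[OF sX x(1)])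
  then have "pt \<alpha> \<beta> \<subseteq> X"
    unfolding pt_def by (rule lspan_append_subset[OF sX X'(2)])
  then have "pt \<alpha> \<beta> = X"
    using vsub_eq_if_subset[OF vsub_pt[OF nz] X'(1)] by simp
  then show ?thesis
    using that nz by blast
qed

lemma pt_eq_if_comb_mem:
  assumes nz: "\<alpha> \<noteq> 0 \<or> \<beta> \<noteq> 0" "\<alpha>' \<noteq> 0 \<or> \<beta>' \<noteq> 0" and mem: "comb \<alpha>' \<beta>' \<in> pt \<alpha> \<beta>"
  shows "pt \<alpha>' \<beta>' = pt \<alpha> \<beta>"
proof -
  have "fv.subspace (pt \<alpha> \<beta>)"
    unfolding pt_def lspan_eq_fspan by simp
  moreover have "lspan vs \<subseteq> pt \<alpha> \<beta>"
    unfolding pt_def by (rule lspan_subset_lspan_append)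
  ultimately have "pt \<alpha>' \<beta>' \<subseteq> pt \<alpha> \<beta>"
    unfolding pt_def[of \<alpha>' \<beta>'] using lspan_append_subset mem by blast
  then show ?thesis
    using vsub_eq_if_subset[OF vsub_pt[OF nz(2)] vsub_pt[OF nz(1)]] by simp
qed

lemma pt_scale:
  assumes nz: "\<alpha> \<noteq> 0 \<or> \<beta> \<noteq> 0" and r: "r \<noteq> 0"
  shows "pt (r * \<alpha>) (r * \<beta>) = pt \<alpha> \<beta>"
proof (rule pt_eq_if_comb_mem[OF nz])
  show "r * \<alpha> \<noteq> 0 \<or> r * \<beta> \<noteq> 0"
    using nz r by simp
  have "comb (r * \<alpha>) (r * \<beta>) = fscale r (comb \<alpha> \<beta>)"
    by (rule ext) (simp add: algebra_simps)
  then show "comb (r * \<alpha>) (r * \<beta>) \<in> pt \<alpha> \<beta>"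
    unfolding pt_def lspan_eq_fspan by (simp add: fv.span_base fv.span_scale)
qed

lemma plucker_form_pt_append: "\<phi> ((vs @ [comb \<alpha> \<beta>]) @ [y]) = \<alpha> * fa y + \<beta> * fb y"
  using plucker_form_linear_penultimate[OF length_vs, of n c \<alpha> a \<beta> b y] by (simp add: fa_def fb_def)

lemma lin_functional_fa: "lin_functional fa"
  using lin_functional_plucker_form_last[where us = "vs @ [a]" and n = n and c = c] length_vs
  by (simp add: fa_def[abs_def])

lemma lin_functional_fb: "lin_functional fb"
  using lin_functional_plucker_form_last[where us = "vs @ [b]" and n = n and c = c] length_vs
  by (simp add: fb_def[abs_def])

lemma pt_nonsingular_iff:
  "\<alpha> \<noteq> 0 \<or> \<beta> \<noteq> 0 \<Longrightarrow> pt \<alpha> \<beta> \<in> nonsingular n h Kc \<longleftrightarrow> \<not> singular_coords \<alpha> \<beta>"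
  using lspan_nonsingular_iff[OF pt_basis] plucker_form_pt_append unfolding pt_def by simp

lemma polar_pt:
  assumes "\<alpha> \<noteq> 0 \<or> \<beta> \<noteq> 0" "\<not> singular_coords \<alpha> \<beta>"
  shows "polar n h Kc (pt \<alpha> \<beta>) = {y\<in>V. \<alpha> * fa y + \<beta> * fb y = 0}"
    and "vsub n n {y\<in>V. \<alpha> * fa y + \<beta> * fb y = 0}"
  using polar_lspan[OF pt_basis[OF assms(1)]] plucker_form_pt_append assms(2) unfolding pt_def by auto


lemma line_disjoint_nonsingular_if_all_singular:
  assumes "singular_coords 1 0" "singular_coords 0 1"
  shows "line \<inter> nonsingular n h Kc = {}"
proof -
  have "X \<notin> nonsingular n h Kc" if "X \<in> line" for X
  proof -
    obtain \<alpha> \<beta> where "\<alpha> \<noteq> 0 \<or> \<beta> \<noteq> 0" "X = pt \<alpha> \<beta>"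
      using \<open>X \<in> line\<close> by (rule lineE)
    then show ?thesis
      using pt_nonsingular_iff assms by simp
  qed
  then show ?thesis
    by blast
qed

context
  fixes s t :: 'a
  assumes st: "s \<noteq> 0 \<or> t \<noteq> 0" "singular_coords s t"
begin

lemma singular_coords_proportional:
  assumes "\<not> (singular_coords 1 0 \<and> singular_coords 0 1)" "singular_coords \<alpha> \<beta>"
  shows "\<exists>r. \<alpha> = r * s \<and> \<beta> = r * t"
proof (cases "\<alpha> * t = \<beta> * s")
  case True
  then show ?thesis
    using proportional_if_cross_eq st(1) by blast
next
  case False
  then have "fa y = 0 \<and> fb y = 0" if "y \<in> V" for y
    using eq_zero_if_cross_ne assms(2) st(2) that by blast
  then show ?thesis
    using assms(1) by simp
qed

text \<open>Since s fa + t fb vanishes on V, all the combinations \<alpha> fa + \<beta> fb are multiples of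
  one functional, which is fb if s \<noteq> 0 and fa otherwise.\<close>

lemma kernel_comb_eq_if_nonsingular:
  assumes "\<not> singular_coords \<alpha> \<beta>"
  shows "{y\<in>V. \<alpha> * fa y + \<beta> * fb y = 0} = {y\<in>V. (if s \<noteq> 0 then fb y else fa y) = 0}"
proof (cases "s \<noteq> 0")
  case True
  let ?k = "\<beta> - \<alpha> * t / s"
  have comb: "\<alpha> * fa y + \<beta> * fb y = ?k * fb y" if "y \<in> V" for y
  proof -
    have "fa y = - (t / s) * fb y"
      using st(2) that True by (simp add: field_simps add_eq_0_iff)
    then show ?thesis
      by (simp add: algebra_simps)
  qed
  then have "?k \<noteq> 0"
    using assms by auto
  then have "\<alpha> * fa y + \<beta> * fb y = 0 \<longleftrightarrow> fb y = 0" if "y \<in> V" for y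
    using comb[OF that] by simp
  then have "{y\<in>V. \<alpha> * fa y + \<beta> * fb y = 0} = {y\<in>V. fb y = 0}"
    by blast
  then show ?thesis
    using True by simp
next
  case False
  then have "t \<noteq> 0"
    using st(1) by simp
  then have "fb y = 0" if "y \<in> V" for y
    using st(2) that False by simp
  moreover have "\<alpha> \<noteq> 0"
    using assms calculation by auto
  ultimately show ?thesis
    using False by auto
qed

lemma line_single_singular:
  assumes A: "\<not> (singular_coords 1 0 \<and> singular_coords 0 1)"
  shows "(\<exists>p. polar n h Kc ` (line \<inter> nonsingular n h Kc) = {p}) \<and>
    (\<exists>q. line - nonsingular n h Kc = {q})"
proof
  let ?E0 = "{y\<in>V. (if s \<noteq> 0 then fb y else fa y) = 0}"
  have "polar n h Kc X = ?E0" if X: "X \<in> line \<inter> nonsingular n h Kc" for X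
  proof -
    from X have "X \<in> line"
      by blast
    then obtain \<alpha> \<beta> where ab: "\<alpha> \<noteq> 0 \<or> \<beta> \<noteq> 0" "X = pt \<alpha> \<beta>"
      by (rule lineE)
    then have "\<not> singular_coords \<alpha> \<beta>"
      using pt_nonsingular_iff X by blast
    then show ?thesis
      using polar_pt(1)[OF ab(1)] kernel_comb_eq_if_nonsingular ab(2) by simp
  qed
  moreover have "pt 1 0 \<in> nonsingular n h Kc \<or> pt 0 1 \<in> nonsingular n h Kc"
    using A pt_nonsingular_iff[of 1 0] pt_nonsingular_iff[of 0 1] by auto
  then have "line \<inter> nonsingular n h Kc \<noteq> {}"
    using pt_in_line[of 1 0] pt_in_line[of 0 1] by auto
  ultimately show "\<exists>p. polar n h Kc ` (line \<inter> nonsingular n h Kc) = {p}"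
    by blast
  have "X = pt s t" if X: "X \<in> line - nonsingular n h Kc" for X
  proof -
    from X have "X \<in> line"
      by blast
    then obtain \<alpha> \<beta> where ab: "\<alpha> \<noteq> 0 \<or> \<beta> \<noteq> 0" "X = pt \<alpha> \<beta>"
      by (rule lineE)
    then have "singular_coords \<alpha> \<beta>"
      using pt_nonsingular_iff X by blast
    then obtain r where r: "\<alpha> = r * s" "\<beta> = r * t"
      using singular_coords_proportional[OF A] by blast
    then have "r \<noteq> 0"
      using ab(1) by auto
    then show ?thesis
      using pt_scale[OF st(1)] ab(2) r by simp
  qed
  moreover have "pt s t \<in> line - nonsingular n h Kc"
    using pt_in_line[OF st(1)] pt_nonsingular_iff[OF st(1)] st(2) by blast
  ultimately show "\<exists>q. line - nonsingular n h Kc = {q}"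
    by blast
qed

end


context
  assumes regular: "\<And>\<alpha> \<beta>. \<alpha> \<noteq> 0 \<or> \<beta> \<noteq> 0 \<Longrightarrow> \<not> singular_coords \<alpha> \<beta>"
begin

lemma line_subset_nonsingular: "line \<subseteq> nonsingular n h Kc"
proof
  fix X assume "X \<in> line"
  then obtain \<alpha> \<beta> where "\<alpha> \<noteq> 0 \<or> \<beta> \<noteq> 0" "X = pt \<alpha> \<beta>"
    by (rule lineE)
  then show "X \<in> nonsingular n h Kc"
    using pt_nonsingular_iff regular by blast
qed

lemma inj_on_polar_line: "inj_on (polar n h Kc) line"
proof (rule inj_onI)
  fix X X' assume X: "X \<in> line" and X': "X' \<in> line" and eq: "polar n h Kc X = polar n h Kc X'"
  obtain \<alpha> \<beta> where ab: "\<alpha> \<noteq> 0 \<or> \<beta> \<noteq> 0" "X = pt \<alpha> \<beta>"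
    using X by (rule lineE)
  obtain \<alpha>' \<beta>' where ab': "\<alpha>' \<noteq> 0 \<or> \<beta>' \<noteq> 0" "X' = pt \<alpha>' \<beta>'"
    using X' by (rule lineE)
  let ?l = "\<lambda>y. \<alpha> * fa y + \<beta> * fb y"
  let ?l' = "\<lambda>y. \<alpha>' * fa y + \<beta>' * fb y"
  have ker: "{y\<in>V. ?l y = 0} = {y\<in>V. ?l' y = 0}"
    using eq polar_pt(1)[OF ab(1) regular[OF ab(1)]] polar_pt(1)[OF ab'(1) regular[OF ab'(1)]] ab(2) ab'(2)
    by simp
  obtain y0 where y0: "y0 \<in> V" "?l y0 \<noteq> 0"
    using regular[OF ab(1)] by blast
  define r where "r = ?l' y0 / ?l y0"
  have "singular_coords (\<alpha>' - r * \<alpha>) (\<beta>' - r * \<beta>)"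
  proof
    fix y assume y: "y \<in> V"
    have "?l' y = r * ?l y"
      unfolding r_def
      using lin_functional_proportional_if_kernel_subset[OF
          lin_functional_comb[OF lin_functional_fa lin_functional_fb]
          lin_functional_comb[OF lin_functional_fa lin_functional_fb] y0 _ y] ker
      by blast
    then show "(\<alpha>' - r * \<alpha>) * fa y + (\<beta>' - r * \<beta>) * fb y = 0"
      by (simp add: algebra_simps)
  qed
  then have "\<alpha>' - r * \<alpha> = 0 \<and> \<beta>' - r * \<beta> = 0"
    using regular by blast
  then have r: "\<alpha>' = r * \<alpha>" "\<beta>' = r * \<beta>"
    by auto
  then have "r \<noteq> 0"
    using ab'(1) by auto
  then show "X = X'"
    using pt_scale[OF ab(1)] r ab(2) ab'(2) by simp
qed

lemma dual_pair:
  obtains y1 y2 where "y1 \<in> V" "y2 \<in> V" "fa y1 = 1" "fb y1 = 0" "fa y2 = 0" "fb y2 = 1"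
  using lin_functional_dual_pair[OF lin_functional_fa lin_functional_fb] regular by blast

lemma polar_line_eq: "polar n h Kc ` line = {E. vsub n n E \<and> {y\<in>V. fa y = 0 \<and> fb y = 0} \<subseteq> E}"
proof (intro equalityI subsetI)
  fix E assume "E \<in> polar n h Kc ` line"
  then obtain X where X: "X \<in> line" "E = polar n h Kc X"
    by blast
  obtain \<alpha> \<beta> where ab: "\<alpha> \<noteq> 0 \<or> \<beta> \<noteq> 0" "X = pt \<alpha> \<beta>"
    using X(1) by (rule lineE)
  then have "E = {y\<in>V. \<alpha> * fa y + \<beta> * fb y = 0}"
    using polar_pt(1)[OF ab(1) regular[OF ab(1)]] X(2) by simp
  moreover have "{y\<in>V. fa y = 0 \<and> fb y = 0} \<subseteq> {y\<in>V. \<alpha> * fa y + \<beta> * fb y = 0}"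
    by auto
  ultimately show "E \<in> {E. vsub n n E \<and> {y\<in>V. fa y = 0 \<and> fb y = 0} \<subseteq> E}"
    using polar_pt(2)[OF ab(1) regular[OF ab(1)]] by simp
next
  fix E assume E: "E \<in> {E. vsub n n E \<and> {y\<in>V. fa y = 0 \<and> fb y = 0} \<subseteq> E}"
  obtain y1 y2 where y: "y1 \<in> V" "y2 \<in> V" "fa y1 = 1" "fb y1 = 0" "fa y2 = 0" "fb y2 = 1"
    by (rule dual_pair)
  obtain \<alpha> \<beta> where ab: "\<alpha> \<noteq> 0 \<or> \<beta> \<noteq> 0" "{y\<in>V. \<alpha> * fa y + \<beta> * fb y = 0} \<subseteq> E"
    using hyperplane_contains_comb_kernel[OF lin_functional_fa lin_functional_fb y] E by blast
  then have "E = polar n h Kc (pt \<alpha> \<beta>)"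
    using vsub_eq_if_subset[OF polar_pt(2)[OF ab(1) regular[OF ab(1)]]] E
      polar_pt(1)[OF ab(1) regular[OF ab(1)]] by auto
  then show "E \<in> polar n h Kc ` line"
    using pt_in_line[OF ab(1)] by blast
qed

lemma polar_line_in_dual_lines: "polar n h Kc ` line \<in> dual_lines n"
proof -
  obtain y1 y2 where y: "y1 \<in> V" "y2 \<in> V" "fa y1 = 1" "fb y1 = 0" "fa y2 = 0" "fb y2 = 1"
    by (rule dual_pair)
  have "vsub n (n - 1) {y\<in>V. fa y = 0 \<and> fb y = 0}"
    using vsub_common_kernel[OF lin_functional_fa lin_functional_fb y] h_less by simp
  then show ?thesis
    unfolding dual_lines_def dual_subspace_def polar_line_eq using h_less by auto
qed

end


lemma line_linear_mapping_condition:
  "let c1 = (line \<subseteq> nonsingular n h Kc \<and> polar n h Kc ` line \<in> dual_lines n \<and> inj_on (polar n h Kc) line);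
       c2 = ((\<exists>p. polar n h Kc ` (line \<inter> nonsingular n h Kc) = {p}) \<and> (\<exists>q. line - nonsingular n h Kc = {q}));
       c3 = (line \<inter> nonsingular n h Kc = {})
   in (c1 \<and> \<not> c2 \<and> \<not> c3) \<or> (\<not> c1 \<and> c2 \<and> \<not> c3) \<or> (\<not> c1 \<and> \<not> c2 \<and> c3)"
proof (rule exactly_one_line_case)
  show "line \<noteq> {}"
    using pt_in_line[of 1 0] by auto
  consider "singular_coords 1 0 \<and> singular_coords 0 1"
    | s t where "\<not> (singular_coords 1 0 \<and> singular_coords 0 1)" "s \<noteq> 0 \<or> t \<noteq> 0" "singular_coords s t"
    | "\<And>\<alpha> \<beta>. \<alpha> \<noteq> 0 \<or> \<beta> \<noteq> 0 \<Longrightarrow> \<not> singular_coords \<alpha> \<beta>"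
    by blast
  then show "(line \<subseteq> nonsingular n h Kc \<and> polar n h Kc ` line \<in> dual_lines n \<and> inj_on (polar n h Kc) line) \<or>
    ((\<exists>p. polar n h Kc ` (line \<inter> nonsingular n h Kc) = {p}) \<and> (\<exists>q. line - nonsingular n h Kc = {q})) \<or>
    line \<inter> nonsingular n h Kc = {}"
  proof cases
    case 1
    then show ?thesis
      using line_disjoint_nonsingular_if_all_singular by simp
  next
    case 2
    then show ?thesis
      using line_single_singular[OF 2(2,3,1)] by blast
  next
    case 3
    then show ?thesis
      using line_subset_nonsingular[OF 3] polar_line_in_dual_lines[OF 3] inj_on_polar_line[OF 3] by simp
  qed
qed

end

lemma gr_linesE:
  assumes "l \<in> gr_lines n k"
  obtains vs a b where "length vs = k" "set (vs @ [a, b]) \<subseteq> vecs n" "lindep_free (vs @ [a, b])"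
    "l = {X. vsub n (Suc k) X \<and> lspan vs \<subseteq> X \<and> X \<subseteq> lspan (vs @ [a, b])}"
proof -
  obtain U W :: "(nat \<Rightarrow> 'a) set" where UW: "vsub n k U" "vsub n (k + 2) W" "U \<subseteq> W"
      "l = {X. vsub n (k + 1) X \<and> U \<subseteq> X \<and> X \<subseteq> W}"
    using assms unfolding gr_lines_def by blast
  obtain vs where vs: "length vs = k" "set vs \<subseteq> vecs n" "lindep_free vs" "U = lspan vs"
    using UW(1) unfolding vsub_def by blast
  have ivs: "findependent (set vs)" "distinct vs"
    using vs(3) unfolding lindep_free_iff_independent by auto
  have "set vs \<subseteq> W"
    using vs(4) UW(3) fv.span_superset[of "set vs"] lspan_eq_fspan by auto
  then obtain B where B: "set vs \<subseteq> B" "B \<subseteq> W" "findependent B" "finite B" "card B = k + 2" "W = fspan B"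
    using vsub_extend_basis[OF UW(2) _ ivs(1)] by blast
  have "card (B - set vs) = 2"
    using B(1,4,5) vs(1) distinct_card[OF ivs(2)] by (simp add: card_Diff_subset)
  then obtain a b where ab: "B - set vs = {a, b}" "a \<noteq> b"
    by (meson card_2_iff)
  have setL: "set (vs @ [a, b]) = B"
    using ab(1) B(1) by auto
  moreover have "distinct (vs @ [a, b])"
    using ab ivs(2) by auto
  ultimately have "lindep_free (vs @ [a, b])" "set (vs @ [a, b]) \<subseteq> vecs n"
    unfolding lindep_free_iff_independent using B(2,3) vsub_subspace[OF UW(2)] by auto
  moreover have "l = {X. vsub n (Suc k) X \<and> lspan vs \<subseteq> X \<and> X \<subseteq> lspan (vs @ [a, b])}"
    using UW(4) vs(4) B(6) setL by (simp add: lspan_eq_fspan)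
  ultimately show ?thesis
    using that vs(1) by blast
qed

context plucker_complex
begin

lemma linear_mapping_polar:
  "linear_mapping (gr_points n (h - 1)) (gr_lines n (h - 1)) (dual_points n) (dual_lines n)
     (nonsingular n h Kc) (polar n h Kc)"
  unfolding linear_mapping_def
proof (intro conjI ballI)
  show "nonsingular n h Kc \<subseteq> gr_points n (h - 1)"
    unfolding gr_points_def nonsingular_def using h_pos by auto
  show "polar n h Kc ` nonsingular n h Kc \<subseteq> dual_points n"
    unfolding dual_points_def using vsub_polar by blast
  fix l :: "(nat \<Rightarrow> 'a) set set" assume "l \<in> gr_lines n (h - 1)"
  then obtain vs a b where vs: "length vs = h - 1" "set (vs @ [a, b]) \<subseteq> vecs n" "lindep_free (vs @ [a, b])"
      "l = {X. vsub n (Suc (h - 1)) X \<and> lspan vs \<subseteq> X \<and> X \<subseteq> lspan (vs @ [a, b])}"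
    by (rule gr_linesE)
  interpret pencil n h c vs a b
    using vs(1-3) h_pos by unfold_locales auto
  have "l = line"
    unfolding line_def vs(4) using h_pos by simp
  then show "let c1 = (l \<subseteq> nonsingular n h Kc \<and> polar n h Kc ` l \<in> dual_lines n \<and> inj_on (polar n h Kc) l);
            c2 = ((\<exists>p. polar n h Kc ` (l \<inter> nonsingular n h Kc) = {p}) \<and> (\<exists>q. l - nonsingular n h Kc = {q}));
            c3 = (l \<inter> nonsingular n h Kc = {})
        in (c1 \<and> \<not> c2 \<and> \<not> c3) \<or> (\<not> c1 \<and> c2 \<and> \<not> c3) \<or> (\<not> c1 \<and> \<not> c2 \<and> c3)"
    using line_linear_mapping_condition by simp
qed

end

theorem theorem5p3:
  fixes n h :: nat and K :: "(nat \<Rightarrow> 'a::field) set set"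
  assumes "1 \<le> h" and "h \<le> n - 1"
    and "linear_complex n h K"
  shows "linear_mapping (gr_points n (h - 1)) (gr_lines n (h - 1)) (dual_points n) (dual_lines n)
            (nonsingular n h K) (polar n h K)
       \<and> nonsingular n h K \<noteq> {}
       \<and> (\<forall>U\<in>nonsingular n h K. U \<subseteq> polar n h K U)
       \<and> h \<le> dual_span_dim n (polar n h K ` nonsingular n h K)"
proof -
  obtain c :: "nat set \<Rightarrow> 'a" where c: "\<exists>I\<in>plucker_index n h. c I \<noteq> 0"
    and K: "K = {X. \<exists>vs. length vs = h + 1 \<and> set vs \<subseteq> vecs n \<and> lindep_free vs \<and> X = lspan vs \<and>
                     (\<Sum>I\<in>plucker_index n h. c I * plucker_coord h vs I) = 0}"
    using assms(3) unfolding linear_complex_def by blast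
  interpret plucker_complex n h c
    using assms(1,2) c by unfold_locales linarith+
  have "K = Kc"
    unfolding K Kc_def ..
  then show ?thesis
    using linear_mapping_polar nonsingular_nonempty subset_polar dual_span_dim_polar by blast
qed

end
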